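(* Let $F=(F_1,\ldots,F_{\ell})$ be an $m$-suitable rooted forest-tuple with $m>e(F)$. Let $B$ be a complete graph on $m+v(F)-e(F)$ vertices, all edges free, and fix an injective assignment of the roots of $F$ to vertices of $B$. Then, playing the Waiter-Client game on $B$, Waiter can force a red copy $\bar F=\bar F_1 \cup \cdots \cup \bar F_{\ell}$ of $F_1 \cup \cdots \cup F_{\ell}$ (with $\bar F_i$ the copy of $F_i$) within $e(F)$ rounds such that: (a) every root is mapped to its assigned vertex; (b) no edge between two images of roots is colored; (c) for every $i\in[\ell]$ there are no blue edges with both endpoints in $V(\bar F_i)$; (d) for every $i\in[\ell]$ there are no red edges with both endpoints in $V(\bar F_i)$ other than the edges of $\bar F_i$; (e) every colored edge intersects $V(\bar F)$; (f) every vertex not in $V(\bar F)$ is incident with at most one colored edge, and the other endpoint of such an edge is not a leaf of $\bar F$.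
   Context: A rooted forest is a forest each of whose components contains exactly one designated vertex, its root. A leaf is a vertex of degree 1 that is not a root. A rooted forest-tuple is a tuple $F=(F_1,\ldots,F_\ell)$ of pairwise vertex-disjoint rooted forests with $e(F_i)>0$ for some $i$; $v(F)$ and $e(F)$ are the total numbers of vertices and edges. Define $a(F)=\max_i e(F_i)$, $k(F)=|\{i: e(F_i)=a(F)\}|$, $t(F)=|\{i: e(F_i)>0\}|$. $F$ is suitable if $3a(F)+k(F)-e(F)\le 2$, or if $a(F)=1$ and $t(F)\ge 4$. A rooted forest-tuple $F=(F_1,\dots,F_\ell)$ is a valid subforest of a rooted forest-tuple $G=(G_1,\dots,G_{\ell''})$ if $\ell\le\ell''$, $F_i\subseteq G_i$ for every $i\in[\ell]$, and every root of $F_i$ is a root of $G_i$. $F$ is $m$-suitable if it is a valid subforest of some suitable rooted forest-tuple $G$ with $e(G)=m$. Waiter-Client game on $B$: in each round Waiter offers two free edges, Client colors one red and the other becomes blue. *)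

theory Defs
  imports Main
begin

type_synonym 'a rforest = "'a set \<times> 'a set set \<times> 'a set"

definition fV :: "'a rforest \<Rightarrow> 'a set" where "fV F = fst F"
definition fE :: "'a rforest \<Rightarrow> 'a set set" where "fE F = fst (snd F)"
definition fR :: "'a rforest \<Rightarrow> 'a set" where "fR F = snd (snd F)"

definition is_graph :: "'a set \<Rightarrow> 'a set set \<Rightarrow> bool" where
  "is_graph V E \<longleftrightarrow> finite V \<and> (\<forall>e\<in>E. \<exists>x y. x \<in> V \<and> y \<in> V \<and> x \<noteq> y \<and> e = {x, y})"

definition is_cycle :: "'a set set \<Rightarrow> 'a list \<Rightarrow> bool" where
  "is_cycle E xs \<longleftrightarrow> length xs \<ge> 3 \<and> distinct xs \<and>
     (\<forall>i < length xs. {xs ! i, xs ! ((i + 1) mod length xs)} \<in> E)"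

definition acyclic_graph :: "'a set set \<Rightarrow> bool" where
  "acyclic_graph E \<longleftrightarrow> \<not> (\<exists>xs. is_cycle E xs)"

definition connected_in :: "'a set set \<Rightarrow> 'a \<Rightarrow> 'a \<Rightarrow> bool" where
  "connected_in E = (\<lambda>x y. {x, y} \<in> E)\<^sup>*\<^sup>*"

definition rooted_forest :: "'a rforest \<Rightarrow> bool" where
  "rooted_forest F \<longleftrightarrow> is_graph (fV F) (fE F) \<and> acyclic_graph (fE F) \<and> fR F \<subseteq> fV F \<and>
     (\<forall>v \<in> fV F. \<exists>!r. r \<in> fR F \<and> connected_in (fE F) v r)"

definition leaves :: "'a rforest \<Rightarrow> 'a set" where
  "leaves F = {v \<in> fV F. card {e \<in> fE F. v \<in> e} = 1 \<and> v \<notin> fR F}"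

definition rooted_forest_tuple :: "'a rforest list \<Rightarrow> bool" where
  "rooted_forest_tuple Fs \<longleftrightarrow> (\<forall>F \<in> set Fs. rooted_forest F) \<and>
     (\<forall>i < length Fs. \<forall>j < length Fs. i \<noteq> j \<longrightarrow> fV (Fs ! i) \<inter> fV (Fs ! j) = {}) \<and>
     (\<exists>F \<in> set Fs. card (fE F) > 0)"

definition vF :: "'a rforest list \<Rightarrow> nat" where "vF Fs = (\<Sum>F \<leftarrow> Fs. card (fV F))"
definition eF :: "'a rforest list \<Rightarrow> nat" where "eF Fs = (\<Sum>F \<leftarrow> Fs. card (fE F))"
definition aF :: "'a rforest list \<Rightarrow> nat" where "aF Fs = Max (set (map (\<lambda>F. card (fE F)) Fs))"
definition kF :: "'a rforest list \<Rightarrow> nat" where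
  "kF Fs = length (filter (\<lambda>F. card (fE F) = aF Fs) Fs)"
definition tF :: "'a rforest list \<Rightarrow> nat" where
  "tF Fs = length (filter (\<lambda>F. card (fE F) > 0) Fs)"

definition tuple_verts :: "'a rforest list \<Rightarrow> 'a set" where "tuple_verts Fs = (\<Union>F \<in> set Fs. fV F)"
definition tuple_roots :: "'a rforest list \<Rightarrow> 'a set" where "tuple_roots Fs = (\<Union>F \<in> set Fs. fR F)"
definition tuple_leaves :: "'a rforest list \<Rightarrow> 'a set" where "tuple_leaves Fs = (\<Union>F \<in> set Fs. leaves F)"

definition suitable :: "'a rforest list \<Rightarrow> bool" where
  "suitable Fs \<longleftrightarrow> rooted_forest_tuple Fs \<and>
     (3 * int (aF Fs) + int (kF Fs) - int (eF Fs) \<le> 2 \<or> (aF Fs = 1 \<and> tF Fs \<ge> 4))"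

definition valid_subforest :: "'a rforest list \<Rightarrow> 'a rforest list \<Rightarrow> bool" where
  "valid_subforest Fs Gs \<longleftrightarrow> rooted_forest_tuple Fs \<and> rooted_forest_tuple Gs \<and>
     length Fs \<le> length Gs \<and>
     (\<forall>i < length Fs. fV (Fs ! i) \<subseteq> fV (Gs ! i) \<and> fE (Fs ! i) \<subseteq> fE (Gs ! i) \<and>
                      fR (Fs ! i) \<subseteq> fR (Gs ! i))"

definition m_suitable :: "nat \<Rightarrow> 'a rforest list \<Rightarrow> bool" where
  "m_suitable m Fs \<longleftrightarrow> (\<exists>Gs. suitable Gs \<and> eF Gs = m \<and> valid_subforest Fs Gs)"

definition complete_edges :: "'b set \<Rightarrow> 'b set set" where
  "complete_edges V = {e. \<exists>x y. x \<in> V \<and> y \<in> V \<and> x \<noteq> y \<and> e = {x, y}}"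

text \<open>In a round Waiter offers two distinct free edges;
 Client colours one red, the other becomes blue.\<close>
fun wc_force :: "'b set \<Rightarrow> nat \<Rightarrow> ('b set set \<Rightarrow> 'b set set \<Rightarrow> bool) \<Rightarrow> 'b set set \<Rightarrow> 'b set set \<Rightarrow> bool" where
  "wc_force V 0 P R Bl = P R Bl"
| "wc_force V (Suc n) P R Bl = (P R Bl \<or>
     (\<exists>e1 e2. e1 \<noteq> e2 \<and> e1 \<in> complete_edges V - (R \<union> Bl) \<and> e2 \<in> complete_edges V - (R \<union> Bl) \<and>
        wc_force V n P (insert e1 R) (insert e2 Bl) \<and> wc_force V n P (insert e2 R) (insert e1 Bl)))"

definition good_red_copy :: "'a rforest list \<Rightarrow> 'b set \<Rightarrow> ('a \<Rightarrow> 'b) \<Rightarrow> 'b set set \<Rightarrow> 'b set set \<Rightarrow> bool" where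
  "good_red_copy Fs VB \<phi> R Bl \<longleftrightarrow> (\<exists>f.
     inj_on f (tuple_verts Fs) \<and> f ` tuple_verts Fs \<subseteq> VB \<and>
     (\<forall>i < length Fs. \<forall>e \<in> fE (Fs ! i). f ` e \<in> R) \<and>
     \<comment> \<open>(a)\<close>
     (\<forall>r \<in> tuple_roots Fs. f r = \<phi> r) \<and>
     \<comment> \<open>(b)\<close>
     (\<forall>r1 \<in> tuple_roots Fs. \<forall>r2 \<in> tuple_roots Fs. r1 \<noteq> r2 \<longrightarrow> {\<phi> r1, \<phi> r2} \<notin> R \<union> Bl) \<and>
     \<comment> \<open>(c)\<close>
     (\<forall>i < length Fs. \<forall>e \<in> Bl. \<not> e \<subseteq> f ` fV (Fs ! i)) \<and>
     \<comment> \<open>(d)\<close>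
     (\<forall>i < length Fs. \<forall>e \<in> R. e \<subseteq> f ` fV (Fs ! i) \<longrightarrow> e \<in> (\<lambda>e'. f ` e') ` fE (Fs ! i)) \<and>
     \<comment> \<open>(e)\<close>
     (\<forall>e \<in> R \<union> Bl. e \<inter> f ` tuple_verts Fs \<noteq> {}) \<and>
     \<comment> \<open>(f)\<close>
     (\<forall>u \<in> VB - f ` tuple_verts Fs.
        card {e \<in> R \<union> Bl. u \<in> e} \<le> 1 \<and>
        (\<forall>w. {u, w} \<in> R \<union> Bl \<longrightarrow> w \<notin> f ` tuple_leaves Fs)))"

end

theory Submission
  imports Defs
begin

lemma rooted_forest_iff:
  "rooted_forest (V, E, R) \<longleftrightarrow> is_graph V E \<and> acyclic_graph E \<and> R \<subseteq> V \<and>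
     (\<forall>v \<in> V. \<exists>!r. r \<in> R \<and> connected_in E v r)"
  by (simp add: rooted_forest_def fV_def fE_def fR_def)

lemma connected_in_refl: "connected_in E x x"
  by (simp add: connected_in_def)

lemma connected_in_edge: "{x, y} \<in> E \<Longrightarrow> connected_in E x y"
  by (simp add: connected_in_def r_into_rtranclp)

lemma connected_in_trans: "connected_in E x y \<Longrightarrow> connected_in E y z \<Longrightarrow> connected_in E x z"
  unfolding connected_in_def by (rule rtranclp_trans)

lemma connected_in_sym:
  assumes "connected_in E x y" shows "connected_in E y x"
proof -
  have "symp (\<lambda>x y. {x, y} \<in> E)" by (simp add: symp_def insert_commute)
  then show ?thesis using assms unfolding connected_in_def by (meson symp_rtranclp sympD)
qed

lemma connected_in_mono:
  assumes "E \<subseteq> E'" and "connected_in E x y"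
  shows "connected_in E' x y"
  using assms(2) unfolding connected_in_def
  by (induction rule: rtranclp_induct) (use assms(1) in \<open>auto intro: rtranclp.rtrancl_into_rtrancl\<close>)

lemma connected_in_empty: "connected_in {} x y \<longleftrightarrow> x = y"
proof
  show "connected_in {} x y \<Longrightarrow> x = y"
    unfolding connected_in_def by (induction rule: rtranclp_induct) auto
qed (simp add: connected_in_def)

lemma is_graph_edge: "is_graph V E \<Longrightarrow> {a, b} \<in> E \<Longrightarrow> a \<in> V \<and> b \<in> V \<and> a \<noteq> b"
  unfolding is_graph_def by (fastforce simp: doubleton_eq_iff)

lemma is_graph_edge_subset: "is_graph V E \<Longrightarrow> e \<in> E \<Longrightarrow> e \<subseteq> V \<and> e \<noteq> {}"
  unfolding is_graph_def by auto

lemma is_graph_finite_edges: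
  assumes "is_graph V E" shows "finite E"
proof -
  have "E \<subseteq> Pow V" "finite V" using assms unfolding is_graph_def by auto
  then show ?thesis by (meson finite_Pow_iff rev_finite_subset)
qed

lemma is_graph_mono: "is_graph V E \<Longrightarrow> E' \<subseteq> E \<Longrightarrow> is_graph V E'"
  unfolding is_graph_def by blast

lemma acyclic_graph_mono: "acyclic_graph E \<Longrightarrow> E' \<subseteq> E \<Longrightarrow> acyclic_graph E'"
  unfolding acyclic_graph_def is_cycle_def by blast

fun walk :: "'a set set \<Rightarrow> 'a list \<Rightarrow> bool" where
  "walk E (x # y # xs) \<longleftrightarrow> {x, y} \<in> E \<and> walk E (y # xs)"
| "walk E _ \<longleftrightarrow> True"

lemma walk_append_left: "walk E (xs @ ys) \<Longrightarrow> walk E xs"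
  by (induction E xs rule: walk.induct) auto

lemma walk_snoc: "walk E xs \<Longrightarrow> xs \<noteq> [] \<Longrightarrow> {last xs, z} \<in> E \<Longrightarrow> walk E (xs @ [z])"
  by (induction E xs rule: walk.induct) auto

lemma walk_nth: "walk E xs \<Longrightarrow> Suc i < length xs \<Longrightarrow> {xs ! i, xs ! Suc i} \<in> E"
  by (induction E xs arbitrary: i rule: walk.induct) (auto simp: nth_Cons split: nat.split)

lemma connected_in_path:
  assumes "connected_in E a b"
  obtains xs where "walk E xs" "distinct xs" "xs \<noteq> []" "hd xs = a" "last xs = b"
proof -
  from assms have "\<exists>xs. walk E xs \<and> distinct xs \<and> xs \<noteq> [] \<and> hd xs = a \<and> last xs = b"
    unfolding connected_in_def
  proof (induction rule: rtranclp_induct)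
    case base
    show ?case by (intro exI[of _ "[a]"]) auto
  next
    case (step y z)
    then obtain xs where xs: "walk E xs" "distinct xs" "xs \<noteq> []" "hd xs = a" "last xs = y"
      by blast
    show ?case
    proof (cases "z \<in> set xs")
      case True
      then obtain ys zs where "xs = ys @ z # zs" by (meson split_list)
      with xs have "walk E ((ys @ [z]) @ zs)" by simp
      then have "walk E (ys @ [z])" by (rule walk_append_left)
      with xs \<open>xs = ys @ z # zs\<close> show ?thesis by (intro exI[of _ "ys @ [z]"]) (auto simp: hd_append)
    next
      case False
      with xs step(2) show ?thesis by (intro exI[of _ "xs @ [z]"]) (auto intro: walk_snoc)
    qed
  qed
  then show ?thesis using that by blast
qed

lemma acyclic_graph_edge_is_bridge:
  assumes acyclic: "acyclic_graph E" and edge: "{x, y} \<in> E" and "x \<noteq> y"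
  shows "\<not> connected_in (E - {{x, y}}) x y"
proof
  assume "connected_in (E - {{x, y}}) x y"
  then obtain xs where xs: "walk (E - {{x, y}}) xs" "distinct xs" "xs \<noteq> []" "hd xs = x" "last xs = y"
    by (rule connected_in_path)
  have first: "xs ! 0 = x" and final: "xs ! (length xs - 1) = y"
    using xs(3-5) by (simp_all add: hd_conv_nth last_conv_nth)
  have "length xs \<noteq> 1" using first final \<open>x \<noteq> y\<close> by auto
  moreover have "length xs \<noteq> 2"
    using walk_nth[OF xs(1), of 0] first final by (auto simp: numeral_2_eq_2)
  moreover have "length xs \<noteq> 0" using xs(3) by simp
  ultimately have long: "length xs \<ge> 3" by linarith
  have "is_cycle E xs"
    unfolding is_cycle_def
  proof (intro conjI allI impI long xs(2))
    fix i assume i: "i < length xs"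
    show "{xs ! i, xs ! ((i + 1) mod length xs)} \<in> E"
    proof (cases "Suc i < length xs")
      case True
      then show ?thesis using walk_nth[OF xs(1) True] by simp
    next
      case False
      then have "i = length xs - 1" "i + 1 = length xs" using i by auto
      then show ?thesis using first final edge by (simp add: insert_commute del: One_nat_def)
    qed
  qed
  then show False using acyclic unfolding acyclic_graph_def by blast
qed

lemma rooted_forest_graph: "rooted_forest (V, E, R) \<Longrightarrow> is_graph V E"
  by (simp add: rooted_forest_iff)

lemma rooted_forest_roots_subset: "rooted_forest (V, E, R) \<Longrightarrow> R \<subseteq> V"
  by (simp add: rooted_forest_iff)

lemma rooted_forest_root_unique:
  assumes "rooted_forest (V, E, R)" "v \<in> V" "r1 \<in> R" "r2 \<in> R"
    and "connected_in E v r1" "connected_in E v r2"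
  shows "r1 = r2"
  using assms unfolding rooted_forest_iff by blast

lemma rooted_forest_root_edge:
  assumes forest: "rooted_forest (V, E, R)" and "r \<in> R" "{r, x} \<in> E"
  shows "x \<in> V" "x \<noteq> r" "x \<notin> R"
proof -
  have graph: "is_graph V E" using forest unfolding rooted_forest_iff by blast
  show "x \<in> V" "x \<noteq> r" using is_graph_edge[OF graph \<open>{r, x} \<in> E\<close>] by auto
  then show "x \<notin> R"
    using rooted_forest_root_unique[OF forest \<open>x \<in> V\<close> _ \<open>r \<in> R\<close> connected_in_refl]
      connected_in_edge[of x r E] \<open>{r, x} \<in> E\<close> by (auto simp: insert_commute)
qed

lemma rooted_forest_obtain_root_edge:
  assumes forest: "rooted_forest (V, E, R)" and "E \<noteq> {}"
  obtains r x where "r \<in> R" "{r, x} \<in> E"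
proof -
  have graph: "is_graph V E"
    and root: "\<And>v. v \<in> V \<Longrightarrow> \<exists>!r. r \<in> R \<and> connected_in E v r"
    using forest unfolding rooted_forest_iff by auto
  obtain e where "e \<in> E" using \<open>E \<noteq> {}\<close> by blast
  with graph obtain a b where ab: "{a, b} \<in> E" unfolding is_graph_def by auto
  then obtain t where t: "t \<in> R" "connected_in E a t"
    using root[of a] is_graph_edge[OF graph] by auto
  show ?thesis
  proof (cases "a = t")
    case True
    then show ?thesis using that[of a b] ab t(1) by simp
  next
    case False
    \<comment> \<open>the last edge on a walk from \<open>a\<close> to its root ends in that root\<close>
    with t(2) obtain y where "{y, t} \<in> E"
      unfolding connected_in_def by (cases rule: rtranclp.cases) auto
    then show ?thesis using that[of t y] t(1) by (simp add: insert_commute)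
  qed
qed

lemma connected_in_reach_set_without_edge:
  assumes "connected_in E v t" "t \<in> T" "r \<in> T" "x \<in> T"
  shows "\<exists>t'\<in>T. connected_in (E - {{r, x}}) v t'"
  using assms(1) unfolding connected_in_def
proof (induction rule: converse_rtranclp_induct)
  case base
  then show ?case using assms(2) by blast
next
  case (step v w)
  then obtain t' where t': "t' \<in> T" "connected_in (E - {{r, x}}) w t'"
    unfolding connected_in_def by blast
  show ?case
  proof (cases "v \<in> T")
    case False
    with assms(3,4) step(1) have "{v, w} \<in> E - {{r, x}}" by auto
    then have "connected_in (E - {{r, x}}) v t'" using t'(2) by (rule connected_in_trans[OF connected_in_edge])
    then show ?thesis using t'(1) unfolding connected_in_def by blast
  qed blast
qed

lemma rooted_forest_cut_root_edge:
  assumes forest: "rooted_forest (V, E, R)" and "r \<in> R" and edge: "{r, x} \<in> E"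
  shows "rooted_forest (V, E - {{r, x}}, insert x R)"
proof -
  have graph: "is_graph V E" and acyclic: "acyclic_graph E" and "R \<subseteq> V"
    and root: "\<And>v. v \<in> V \<Longrightarrow> \<exists>!r. r \<in> R \<and> connected_in E v r"
    using forest unfolding rooted_forest_iff by auto
  have xr: "{x, r} \<in> E" "r \<in> R" using edge \<open>r \<in> R\<close> by (simp_all add: insert_commute)
  have "x \<in> V" "x \<noteq> r" using rooted_forest_root_edge[OF forest \<open>r \<in> R\<close> edge] by auto
  define E' where "E' = E - {{r, x}}"
  define R' where "R' = insert x R"
  have "E' \<subseteq> E" unfolding E'_def by blast
  have bridge: "\<not> connected_in E' x r"
    using acyclic_graph_edge_is_bridge[OF acyclic xr(1) \<open>x \<noteq> r\<close>] unfolding E'_def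
    by (simp add: insert_commute)
  have x_isolated: "t = x" if "t \<in> R'" "connected_in E' x t" for t
  proof (rule ccontr)
    assume "t \<noteq> x"
    with that(1) have "t \<in> R" unfolding R'_def by blast
    with that(2) have "t = r"
      using rooted_forest_root_unique[OF forest \<open>x \<in> V\<close> _ xr(2) _ connected_in_edge[OF xr(1)]]
        connected_in_mono[OF \<open>E' \<subseteq> E\<close>] by blast
    with that(2) bridge show False by simp
  qed
  have reach: "\<exists>t'\<in>R'. connected_in E' v t'" if v: "v \<in> V" for v
  proof -
    obtain t where "connected_in E v t" "t \<in> R" using root[OF v] by blast
    then show ?thesis
      using connected_in_reach_set_without_edge[of E v t R' r x] xr(2) unfolding E'_def R'_def by blast
  qed
  have unique: "t1 = t2"
    if t: "t1 \<in> R'" "t2 \<in> R'" "connected_in E' v t1" "connected_in E' v t2" for v t1 t2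
  proof -
    have link: "connected_in E' t1 t2"
      using connected_in_trans[OF connected_in_sym[OF t(3)] t(4)] .
    consider "t1 = x" | "t2 = x" | "t1 \<in> R" "t2 \<in> R" using t(1,2) unfolding R'_def by blast
    then show ?thesis
    proof cases
      case 1
      then show ?thesis using x_isolated[OF t(2)] link by simp
    next
      case 2
      then show ?thesis using x_isolated[OF t(1)] connected_in_sym[OF link] by simp
    next
      case 3
      then show ?thesis
        using rooted_forest_root_unique[OF forest _ _ _ connected_in_refl] \<open>R \<subseteq> V\<close>
          connected_in_mono[OF \<open>E' \<subseteq> E\<close> link] by blast
    qed
  qed
  have "\<exists>!t. t \<in> R' \<and> connected_in E' v t" if v: "v \<in> V" for v
  proof -
    obtain t where "t \<in> R'" "connected_in E' v t" using reach[OF v] by blast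
    then show ?thesis by (intro ex1I[of _ t]) (use unique in blast)+
  qed
  moreover have "R' \<subseteq> V" using \<open>R \<subseteq> V\<close> \<open>x \<in> V\<close> unfolding R'_def by blast
  ultimately show ?thesis
    unfolding rooted_forest_iff E'_def[symmetric] R'_def[symmetric]
    using is_graph_mono[OF graph \<open>E' \<subseteq> E\<close>] acyclic_graph_mono[OF acyclic \<open>E' \<subseteq> E\<close>] by auto
qed

lemma rooted_forest_no_edges: "rooted_forest (V, {}, R) \<Longrightarrow> V = R"
  unfolding rooted_forest_iff connected_in_empty by blast

lemma rooted_forest_card:
  "rooted_forest (V, E, R) \<Longrightarrow> card V = card E + card R"
proof (induction "card E" arbitrary: E R rule: less_induct)
  case less
  have graph: "is_graph V E" and "R \<subseteq> V"
    using less.prems unfolding rooted_forest_iff by auto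
  have "finite E" "finite R"
    using is_graph_finite_edges[OF graph] graph \<open>R \<subseteq> V\<close> finite_subset
    unfolding is_graph_def by auto
  show ?case
  proof (cases "E = {}")
    case True
    then show ?thesis using rooted_forest_no_edges[of V R] less.prems by simp
  next
    case False
    then obtain r x where "r \<in> R" "{r, x} \<in> E"
      using rooted_forest_obtain_root_edge[OF less.prems] by blast
    then have rx: "x \<notin> R" "{r, x} \<in> E" "rooted_forest (V, E - {{r, x}}, insert x R)"
      using rooted_forest_root_edge[OF less.prems] rooted_forest_cut_root_edge[OF less.prems] by auto
    with \<open>finite E\<close> have "card (E - {{r, x}}) < card E" by (meson card_Diff1_less)
    then have "card V = card (E - {{r, x}}) + card (insert x R)" using less.hyps rx(3) by blast
    moreover have "card E > 0" using rx(2) \<open>finite E\<close> card_gt_0_iff by blast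
    ultimately show ?thesis using rx \<open>finite E\<close> \<open>finite R\<close> by simp
  qed
qed

lemma rooted_forest_tuple_nth:
  "rooted_forest_tuple Fs \<Longrightarrow> i < length Fs \<Longrightarrow> rooted_forest (fV (Fs ! i), fE (Fs ! i), fR (Fs ! i))"
  unfolding rooted_forest_tuple_def by (simp add: fV_def fE_def fR_def)

lemma rooted_forest_tuple_graph:
  "rooted_forest_tuple Fs \<Longrightarrow> i < length Fs \<Longrightarrow> is_graph (fV (Fs ! i)) (fE (Fs ! i))"
  using rooted_forest_tuple_nth rooted_forest_graph by blast

lemma rooted_forest_tuple_finite_edges:
  "rooted_forest_tuple Fs \<Longrightarrow> i < length Fs \<Longrightarrow> finite (fE (Fs ! i))"
  using rooted_forest_tuple_graph is_graph_finite_edges by blast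

lemma sum_list_conv_sum_lessThan: "(\<Sum>F\<leftarrow>Fs. g F) = (\<Sum>i<length Fs. g (Fs ! i))"
  by (simp add: sum_list_sum_nth atLeast0LessThan)

lemma eF_conv_sum: "eF Fs = (\<Sum>i<length Fs. card (fE (Fs ! i)))"
  unfolding eF_def by (rule sum_list_conv_sum_lessThan)

lemma tF_le_eF: "tF Fs \<le> eF Fs"
  unfolding tF_def eF_def by (induction Fs) auto

lemma card_edges_le_aF: "i < length Fs \<Longrightarrow> card (fE (Fs ! i)) \<le> aF Fs"
  unfolding aF_def by simp

lemma aF_pos:
  assumes "rooted_forest_tuple Fs" shows "0 < aF Fs"
proof -
  obtain F where "F \<in> set Fs" "0 < card (fE F)"
    using assms unfolding rooted_forest_tuple_def by blast
  moreover from \<open>F \<in> set Fs\<close> have "card (fE F) \<le> aF Fs"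
    unfolding aF_def by (intro Max_ge) auto
  ultimately show ?thesis by linarith
qed

lemma card_le_kF:
  assumes "\<And>i. i \<in> I \<Longrightarrow> i < length Fs \<and> card (fE (Fs ! i)) = aF Fs"
  shows "card I \<le> kF Fs"
proof -
  have "I \<subseteq> {i. i < length Fs \<and> card (fE (Fs ! i)) = aF Fs}" using assms by blast
  then show ?thesis unfolding kF_def length_filter_conv_card by (rule card_mono[rotated]) simp
qed

lemma kF_pos:
  assumes "Fs \<noteq> []" shows "0 < kF Fs"
proof -
  have "aF Fs \<in> (\<lambda>F. card (fE F)) ` set Fs"
    unfolding aF_def using assms by (simp add: Max_in)
  then obtain i where "i < length Fs" "card (fE (Fs ! i)) = aF Fs"
    by (auto simp: in_set_conv_nth)
  then show ?thesis using card_le_kF[of "{i}" Fs] by simp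
qed

lemma suitable_cases:
  assumes "suitable Fs"
  shows "3 * aF Fs + kF Fs \<le> eF Fs + 2 \<or> (aF Fs = 1 \<and> 4 \<le> eF Fs)"
  using assms tF_le_eF[of Fs] unfolding suitable_def by linarith

lemma suitable_edge_bound_pair:
  assumes "suitable Fs" "a < length Fs" "b < length Fs" "a \<noteq> b"
  shows "2 * card (fE (Fs ! a)) + card (fE (Fs ! b)) \<le> eF Fs"
proof -
  have "card (fE (Fs ! a)) \<le> aF Fs" "card (fE (Fs ! b)) \<le> aF Fs"
    using card_edges_le_aF assms(2,3) by blast+
  moreover have "0 < aF Fs" using aF_pos assms(1) unfolding suitable_def by blast
  moreover have "0 < kF Fs" using assms(2) by (intro kF_pos) auto
  moreover have "2 \<le> kF Fs" if "card (fE (Fs ! a)) = aF Fs" "card (fE (Fs ! b)) = aF Fs"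
  proof -
    have "card {a, b} \<le> kF Fs" by (rule card_le_kF) (use assms that in auto)
    then show ?thesis using assms(4) by simp
  qed
  ultimately show ?thesis using suitable_cases[OF assms(1)]
    by (cases "card (fE (Fs ! a)) = aF Fs \<and> card (fE (Fs ! b)) = aF Fs") linarith+
qed

lemma suitable_edge_bound_single:
  assumes "suitable Fs" "a < length Fs"
  shows "2 * card (fE (Fs ! a)) \<le> eF Fs"
proof -
  have "card (fE (Fs ! a)) \<le> aF Fs" using card_edges_le_aF assms(2) by blast
  moreover have "0 < aF Fs" using aF_pos assms(1) unfolding suitable_def by blast
  moreover have "0 < kF Fs" using assms(2) by (intro kF_pos) auto
  ultimately show ?thesis using suitable_cases[OF assms(1)] by linarith
qed

definition budget :: "nat \<Rightarrow> (nat \<Rightarrow> nat) \<Rightarrow> nat \<Rightarrow> bool" where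
  "budget l d p \<longleftrightarrow> (\<forall>a<l. \<forall>b<l. a \<noteq> b \<longrightarrow> 2 * d a + d b \<le> p) \<and> (\<forall>a<l. 2 * d a \<le> p) \<and>
     (sum d {..<l} = 0 \<or> sum d {..<l} < p)"

lemma sum_lessThan_ge_pair:
  fixes d :: "nat \<Rightarrow> nat"
  assumes "a < l" "b < l" "a \<noteq> b"
  shows "d a + d b \<le> sum d {..<l}"
  using sum_mono2[of "{..<l}" "{a, b}" d] assms by simp

lemma sum_lessThan_ge_triple:
  fixes d :: "nat \<Rightarrow> nat"
  assumes "a < l" "b < l" "c < l" "a \<noteq> b" "a \<noteq> c" "b \<noteq> c"
  shows "d a + d b + d c \<le> sum d {..<l}"
  using sum_mono2[of "{..<l}" "{a, b, c}" d] assms by simp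

lemma sum_lessThan_decrement:
  fixes d :: "nat \<Rightarrow> nat"
  assumes "i < l" "0 < d i"
  shows "sum (d(i := d i - 1)) {..<l} = sum d {..<l} - 1"
proof -
  have "sum (d(i := d i - 1)) {..<l} = (d i - 1) + sum d ({..<l} - {i})"
    using assms(1) by (simp add: sum.remove)
  moreover have "sum d {..<l} = d i + sum d ({..<l} - {i})"
    using assms(1) by (simp add: sum.remove)
  ultimately show ?thesis using assms(2) by simp
qed

lemma sum_lessThan_decrement_two:
  fixes d :: "nat \<Rightarrow> nat"
  assumes "i < l" "j < l" "i \<noteq> j" "0 < d i" "0 < d j"
  shows "sum (d(i := d i - 1, j := d j - 1)) {..<l} = sum d {..<l} - 2"
  using sum_lessThan_decrement[of i l d] sum_lessThan_decrement[of j l "d(i := d i - 1)"] assms by simp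

lemma ex_max_index:
  fixes d :: "nat \<Rightarrow> nat"
  assumes "finite A" "A \<noteq> {}"
  shows "\<exists>i\<in>A. \<forall>a\<in>A. d a \<le> d i"
proof -
  have "Max (d ` A) \<in> d ` A" using assms by simp
  then obtain i where "i \<in> A" "d i = Max (d ` A)" by (metis imageE)
  moreover have "d a \<le> Max (d ` A)" if "a \<in> A" for a using assms(1) that by simp
  ultimately show ?thesis by (intro bexI[of _ i]) auto
qed

lemma budget_single:
  assumes budget: "budget l d p" and i: "i < l" "0 < d i"
    and others: "\<And>a. a < l \<Longrightarrow> a \<noteq> i \<Longrightarrow> d a = 0"
  shows "2 \<le> p \<and> budget l (d(i := d i - 1)) (p - 2)"
proof -
  have "2 * d i \<le> p" using budget i unfolding budget_def by blast
  moreover have "sum (d(i := d i - 1)) {..<l} = d i - 1"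
    using sum_lessThan_decrement[of i l d, OF i] sum.remove[of "{..<l}" i d] others i by simp
  ultimately show ?thesis
    unfolding budget_def using i others by auto
qed

lemma budget_top_two:
  assumes budget: "budget l d p" and ij: "i < l" "j < l" "i \<noteq> j" "0 < d j"
    and max_i: "\<And>a. a < l \<Longrightarrow> d a \<le> d i"
    and max_j: "\<And>a. a < l \<Longrightarrow> a \<noteq> i \<Longrightarrow> d a \<le> d j"
    and top_two: "d j = d i \<or> (\<forall>a<l. a \<noteq> i \<longrightarrow> a \<noteq> j \<longrightarrow> d a = 0)"
  shows "0 < p \<and> budget l (d(i := d i - 1)) (p - 1) \<and> budget l (d(j := d j - 1)) (p - 1)"
proof -
  let ?n = "sum d {..<l}"
  have P: "\<And>a b. a < l \<Longrightarrow> b < l \<Longrightarrow> a \<noteq> b \<Longrightarrow> 2 * d a + d b \<le> p"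
    and Q: "\<And>a. a < l \<Longrightarrow> 2 * d a \<le> p" and N: "?n = 0 \<or> ?n < p"
    using budget unfolding budget_def by auto
  note S2 = sum_lessThan_ge_pair[of _ l _ d] and S3 = sum_lessThan_ge_triple[of _ l _ _ d]
  have "d j \<le> d i" using max_i ij by blast
  have "?n < p" using N S2[OF ij(1-3)] ij(4) by linarith
  have "0 < d i" using \<open>d j \<le> d i\<close> ij(4) by linarith
  have sum_i: "sum (d(i := d i - 1)) {..<l} = ?n - 1"
    using sum_lessThan_decrement[of i l d] ij \<open>0 < d i\<close> by blast
  have sum_j: "sum (d(j := d j - 1)) {..<l} = ?n - 1"
    using sum_lessThan_decrement[of j l d] ij by blast
  have "budget l (d(i := d i - 1)) (p - 1)"
    unfolding budget_def sum_i
  proof (intro conjI allI impI)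
    fix a b assume ab: "a < l" "b < l" "a \<noteq> b"
    show "2 * (d(i := d i - 1)) a + (d(i := d i - 1)) b \<le> p - 1"
    proof (cases "a = i \<or> b = i")
      case True
      then show ?thesis using P[OF ab] \<open>0 < d i\<close> ab(3) by auto
    next
      case False
      then show ?thesis using S3[of a b i] ab ij(1) max_i[OF ab(1)] \<open>?n < p\<close> by auto
    qed
  next
    fix a assume a: "a < l"
    show "2 * (d(i := d i - 1)) a \<le> p - 1"
      using Q[OF a] S2[OF a ij(1)] max_i[OF a] \<open>?n < p\<close> \<open>0 < d i\<close> by auto
  qed (use \<open>?n < p\<close> in linarith)
  moreover have "budget l (d(j := d j - 1)) (p - 1)"
    unfolding budget_def sum_j
  proof (intro conjI allI impI)
    fix a b assume ab: "a < l" "b < l" "a \<noteq> b"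
    consider "a = j \<or> b = j" | "a = i" "b \<notin> {i, j}" | "b = i" "a \<notin> {i, j}"
      | "a \<notin> {i, j}" "b \<notin> {i, j}"
      using ab(3) by blast
    then show "2 * (d(j := d j - 1)) a + (d(j := d j - 1)) b \<le> p - 1"
    proof cases
      case 1
      then show ?thesis using P[OF ab] ij(4) ab(3) by auto
    next
      case 2
      then show ?thesis
        using top_two S3[of i j b] P[OF ij(1-3)] ij ab(2) \<open>?n < p\<close> by auto
    next
      case 3
      then show ?thesis
        using top_two S3[of a j i] S2[OF ij(1-3)] max_j[of a] ij ab(1) \<open>?n < p\<close> by auto
    next
      case 4
      then show ?thesis using S3[of a b i] ab ij(1) max_i[OF ab(1)] \<open>?n < p\<close> by auto
    qed
  next
    fix a assume a: "a < l"
    show "2 * (d(j := d j - 1)) a \<le> p - 1"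
      using Q[OF a] P[OF ij(1-3)] S2[of a i] a ij max_i[OF a] \<open>?n < p\<close> by auto
  qed (use \<open>?n < p\<close> in linarith)
  ultimately show ?thesis using \<open>?n < p\<close> by simp
qed

lemma budget_strict_max:
  assumes budget: "budget l d p" and iy: "i < l" "y < l" "i \<noteq> y" "0 < d y"
    and strict_max: "\<And>a. a < l \<Longrightarrow> a \<noteq> i \<Longrightarrow> d a < d i"
  shows "2 \<le> p \<and> budget l (d(i := d i - 1, y := d y - 1)) (p - 2)"
proof -
  let ?n = "sum d {..<l}" and ?d = "d(i := d i - 1, y := d y - 1)"
  have P: "\<And>a b. a < l \<Longrightarrow> b < l \<Longrightarrow> a \<noteq> b \<Longrightarrow> 2 * d a + d b \<le> p"
    and Q: "\<And>a. a < l \<Longrightarrow> 2 * d a \<le> p" and N: "?n = 0 \<or> ?n < p"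
    using budget unfolding budget_def by auto
  note S2 = sum_lessThan_ge_pair[of _ l _ d] and S3 = sum_lessThan_ge_triple[of _ l _ _ d]
  have "d y < d i" using strict_max iy by blast
  have "?n < p" using N S2[OF iy(1-3)] iy(4) by linarith
  have sum_iy: "sum ?d {..<l} = ?n - 2"
    using sum_lessThan_decrement_two[of i l y d] iy \<open>d y < d i\<close> by simp
  have "budget l ?d (p - 2)"
    unfolding budget_def sum_iy
  proof (intro conjI allI impI)
    fix a b assume ab: "a < l" "b < l" "a \<noteq> b"
    have "?d b \<le> d b" by simp
    consider "a = i \<or> a = y" | "b = i" "a \<notin> {i, y}" | "b = y" "a \<notin> {i, y}"
      | "a \<notin> {i, y}" "b \<notin> {i, y}"
      by blast
    then show "2 * ?d a + ?d b \<le> p - 2"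
    proof cases
      case 1
      then show ?thesis using P[OF ab] \<open>?d b \<le> d b\<close> iy(3,4) \<open>d y < d i\<close> by auto
    next
      case 2
      then show ?thesis using P[of i a] strict_max[of a] ab(1) iy by auto
    next
      case 3
      then show ?thesis using S3[of a i y] strict_max[of a] ab(1) iy \<open>?n < p\<close> by auto
    next
      case 4
      then show ?thesis using S3[of a b i] strict_max[of a] ab iy(1) \<open>?n < p\<close> by auto
    qed
  next
    fix a assume a: "a < l"
    show "2 * ?d a \<le> p - 2"
      using Q[OF a] S3[of a i y] strict_max[of a] a iy \<open>?n < p\<close> by auto
  qed (use \<open>?n < p\<close> in linarith)
  moreover have "2 \<le> p" using Q[OF iy(1)] iy(4) \<open>d y < d i\<close> by linarith
  ultimately show ?thesis by simp
qed

lemma obtain_two_elements: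
  assumes "finite A" "2 \<le> card A"
  obtains a b where "a \<in> A" "b \<in> A" "a \<noteq> b"
  using assms by (metis One_nat_def card_le_Suc0_iff_eq not_less_eq_eq numeral_2_eq_2)

lemma m_suitable_budget:
  assumes "m_suitable m Fs" "eF Fs < m"
  shows "budget (length Fs) (\<lambda>i. card (fE (Fs ! i))) m"
proof -
  obtain Gs where Gs: "suitable Gs" "eF Gs = m" "valid_subforest Fs Gs"
    using assms(1) unfolding m_suitable_def by blast
  have "length Fs \<le> length Gs" using Gs(3) unfolding valid_subforest_def by blast
  have le: "card (fE (Fs ! i)) \<le> card (fE (Gs ! i))" if "i < length Fs" for i
  proof (rule card_mono)
    show "finite (fE (Gs ! i))"
      using rooted_forest_tuple_finite_edges Gs(1) that \<open>length Fs \<le> length Gs\<close>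
      unfolding suitable_def by fastforce
    show "fE (Fs ! i) \<subseteq> fE (Gs ! i)" using Gs(3) that unfolding valid_subforest_def by blast
  qed
  show ?thesis
    unfolding budget_def eF_conv_sum[symmetric]
  proof (intro conjI allI impI)
    fix a b assume ab: "a < length Fs" "b < length Fs" "a \<noteq> b"
    then have "2 * card (fE (Gs ! a)) + card (fE (Gs ! b)) \<le> m"
      using suitable_edge_bound_pair[OF Gs(1), of a b] \<open>length Fs \<le> length Gs\<close> Gs(2) by simp
    then show "2 * card (fE (Fs ! a)) + card (fE (Fs ! b)) \<le> m" using le[OF ab(1)] le[OF ab(2)] by linarith
  next
    fix a assume a: "a < length Fs"
    then have "2 * card (fE (Gs ! a)) \<le> m"
      using suitable_edge_bound_single[OF Gs(1), of a] \<open>length Fs \<le> length Gs\<close> Gs(2) by simp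
    then show "2 * card (fE (Fs ! a)) \<le> m" using le[OF a] by linarith
  qed (use assms(2) in simp)
qed

definition waiter_round ::
  "'b set \<Rightarrow> ('b set set \<Rightarrow> 'b set set \<Rightarrow> bool) \<Rightarrow> 'b set set \<Rightarrow> 'b set set \<Rightarrow> bool" where
  "waiter_round V Q R Bl \<longleftrightarrow> (\<exists>e1 e2. e1 \<noteq> e2 \<and>
     e1 \<in> complete_edges V - (R \<union> Bl) \<and> e2 \<in> complete_edges V - (R \<union> Bl) \<and>
     Q (insert e1 R) (insert e2 Bl) \<and> Q (insert e2 R) (insert e1 Bl))"

lemma waiter_roundI:
  assumes "e1 \<noteq> e2" "e1 \<in> complete_edges V - (R \<union> Bl)" "e2 \<in> complete_edges V - (R \<union> Bl)"
    and "Q (insert e1 R) (insert e2 Bl)" "Q (insert e2 R) (insert e1 Bl)"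
  shows "waiter_round V Q R Bl"
  using assms unfolding waiter_round_def by blast

lemma waiter_round_mono:
  assumes "waiter_round V Q R Bl" "\<And>R Bl. Q R Bl \<Longrightarrow> Q' R Bl"
  shows "waiter_round V Q' R Bl"
  using assms unfolding waiter_round_def by meson

lemma wc_force_Suc_if_waiter_round:
  "waiter_round V (wc_force V n P) R Bl \<Longrightarrow> wc_force V (Suc n) P R Bl"
  unfolding waiter_round_def by auto

lemma doubleton_in_complete_edges:
  "a \<in> V \<Longrightarrow> b \<in> V \<Longrightarrow> a \<noteq> b \<Longrightarrow> {a, b} \<in> complete_edges V"
  unfolding complete_edges_def by blast

lemma UN_set_conv_UN_nth: "(\<Union>x\<in>set xs. g x) = (\<Union>i<length xs. g (xs ! i))"
  by (auto simp: in_set_conv_nth) (use nth_mem in blast)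

lemma UN_lessThan_update_insert:
  "i < l \<Longrightarrow> (\<Union>a<l. (G(i := insert c (G i))) a) = insert c (\<Union>a<l. G a)"
  by (auto split: if_splits)

locale forest_game =
  fixes Fs :: "'a rforest list" and VB :: "'b set" and \<phi> :: "'a \<Rightarrow> 'b"
  assumes tuple: "rooted_forest_tuple Fs" and finite_board: "finite VB"
begin

lemma forest_nth: "i < length Fs \<Longrightarrow> rooted_forest (fV (Fs ! i), fE (Fs ! i), fR (Fs ! i))"
  using rooted_forest_tuple_nth[OF tuple] .

lemma roots_subset_nth: "i < length Fs \<Longrightarrow> fR (Fs ! i) \<subseteq> fV (Fs ! i)"
  using forest_nth rooted_forest_roots_subset by blast

lemma edge_subset_nth: "i < length Fs \<Longrightarrow> e \<in> fE (Fs ! i) \<Longrightarrow> e \<subseteq> fV (Fs ! i) \<and> e \<noteq> {}"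
  using is_graph_edge_subset rooted_forest_tuple_graph[OF tuple] by blast

lemma same_forest:
  assumes "i < length Fs" "j < length Fs" "x \<in> fV (Fs ! i)" "x \<in> fV (Fs ! j)"
  shows "i = j"
proof (rule ccontr)
  assume "i \<noteq> j"
  then have "fV (Fs ! i) \<inter> fV (Fs ! j) = {}"
    using tuple assms(1,2) unfolding rooted_forest_tuple_def by simp
  then show False using assms(3,4) by blast
qed

lemma tuple_verts_conv: "tuple_verts Fs = (\<Union>i<length Fs. fV (Fs ! i))"
  unfolding tuple_verts_def by (rule UN_set_conv_UN_nth)

lemma tuple_roots_conv: "tuple_roots Fs = (\<Union>i<length Fs. fR (Fs ! i))"
  unfolding tuple_roots_def by (rule UN_set_conv_UN_nth)

lemma tuple_leaves_conv: "tuple_leaves Fs = (\<Union>i<length Fs. leaves (Fs ! i))"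
  unfolding tuple_leaves_def by (rule UN_set_conv_UN_nth)

definition embedded :: "(nat \<Rightarrow> 'a set) \<Rightarrow> 'a set" where
  "embedded S = (\<Union>i<length Fs. S i)"

definition fresh :: "(nat \<Rightarrow> 'a set) \<Rightarrow> ('a \<Rightarrow> 'b) \<Rightarrow> 'b set set \<Rightarrow> 'b set" where
  "fresh S f C = {v \<in> VB. v \<notin> f ` embedded S \<and> (\<forall>e\<in>C. v \<notin> e)}"

definition remaining :: "(nat \<Rightarrow> 'a set set) \<Rightarrow> nat \<Rightarrow> nat" where
  "remaining D i = card (fE (Fs ! i) - D i)"

text \<open>\<open>S i\<close> and \<open>D i\<close> are the vertices and edges of the \<open>i\<close>-th forest embedded so far;
  the edges still to be embedded form a forest rooted at \<open>S i\<close>.\<close>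
definition partial_copy :: "(nat \<Rightarrow> 'a set set) \<Rightarrow> (nat \<Rightarrow> 'a set) \<Rightarrow> bool" where
  "partial_copy D S \<longleftrightarrow> (\<forall>i<length Fs. D i \<subseteq> fE (Fs ! i) \<and> fR (Fs ! i) \<subseteq> S i \<and>
     rooted_forest (fV (Fs ! i), fE (Fs ! i) - D i, S i) \<and> (\<forall>e\<in>D i. e \<subseteq> S i) \<and>
     (\<forall>v\<in>S i - fR (Fs ! i). \<exists>e\<in>D i. v \<in> e))"

lemma partial_copyD:
  assumes "partial_copy D S" "i < length Fs"
  shows "D i \<subseteq> fE (Fs ! i)" "fR (Fs ! i) \<subseteq> S i" "rooted_forest (fV (Fs ! i), fE (Fs ! i) - D i, S i)"
    "\<And>e. e \<in> D i \<Longrightarrow> e \<subseteq> S i" "\<And>v. v \<in> S i \<Longrightarrow> v \<notin> fR (Fs ! i) \<Longrightarrow> \<exists>e\<in>D i. v \<in> e"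
  using assms unfolding partial_copy_def by blast+

lemma partial_copy_subset:
  "partial_copy D S \<Longrightarrow> i < length Fs \<Longrightarrow> S i \<subseteq> fV (Fs ! i)"
  using partial_copyD(3) rooted_forest_roots_subset by blast

lemma embeddedI: "i < length Fs \<Longrightarrow> x \<in> S i \<Longrightarrow> x \<in> embedded S"
  unfolding embedded_def by blast

lemma embedded_update: "i < length Fs \<Longrightarrow> embedded (S(i := insert x (S i))) = insert x (embedded S)"
  unfolding embedded_def by (auto split: if_splits)

lemma partial_copy_not_embedded:
  assumes "partial_copy D S" "i < length Fs" "x \<in> fV (Fs ! i)" "x \<notin> S i"
  shows "x \<notin> embedded S"
  using assms partial_copy_subset same_forest unfolding embedded_def by blast

lemma partial_copy_roots_embedded: "partial_copy D S \<Longrightarrow> tuple_roots Fs \<subseteq> embedded S"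
  unfolding tuple_roots_conv embedded_def using partial_copyD(2) by blast

lemma partial_copy_extend:
  assumes copy: "partial_copy D S" and i: "i < length Fs"
    and p: "p \<in> S i" and edge: "{p, x} \<in> fE (Fs ! i) - D i"
  shows "x \<in> fV (Fs ! i)" "x \<notin> S i"
    and "partial_copy (D(i := insert {p, x} (D i))) (S(i := insert x (S i)))"
proof -
  note forest = partial_copyD(3)[OF copy i]
  show "x \<in> fV (Fs ! i)" "x \<notin> S i" using rooted_forest_root_edge[OF forest p edge] by auto
  have "fE (Fs ! i) - insert {p, x} (D i) = fE (Fs ! i) - D i - {{p, x}}" by blast
  then have "rooted_forest (fV (Fs ! i), fE (Fs ! i) - insert {p, x} (D i), insert x (S i))"
    using rooted_forest_cut_root_edge[OF forest p edge] by simp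
  then show "partial_copy (D(i := insert {p, x} (D i))) (S(i := insert x (S i)))"
    using copy edge p unfolding partial_copy_def by auto
qed

lemma partial_copy_not_leaf:
  assumes copy: "partial_copy D S" and i: "i < length Fs"
    and p: "p \<in> S i" and edge: "{p, x} \<in> fE (Fs ! i) - D i"
  shows "p \<notin> leaves (Fs ! i)"
proof
  assume leaf: "p \<in> leaves (Fs ! i)"
  then obtain e where "e \<in> D i" "p \<in> e" using partial_copyD(5)[OF copy i p] unfolding leaves_def by blast
  \<comment> \<open>a non-root embedded vertex already has an embedded edge, so \<open>{p, x}\<close> is a second one\<close>
  then have "{e, {p, x}} \<subseteq> {e \<in> fE (Fs ! i). p \<in> e}" "e \<noteq> {p, x}"
    using edge partial_copyD(1)[OF copy i] by auto
  then have "card {e, {p, x}} \<le> card {e \<in> fE (Fs ! i). p \<in> e}"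
    using rooted_forest_tuple_finite_edges[OF tuple i] by (intro card_mono) auto
  with \<open>e \<noteq> {p, x}\<close> show False using leaf unfolding leaves_def by simp
qed

lemma partial_copy_obtain_frontier:
  assumes "partial_copy D S" "i < length Fs" "0 < remaining D i"
  obtains p x where "p \<in> S i" "{p, x} \<in> fE (Fs ! i) - D i"
proof -
  have "fE (Fs ! i) - D i \<noteq> {}" using assms(3) unfolding remaining_def by (metis card.empty less_irrefl)
  then show ?thesis
    using rooted_forest_obtain_root_edge[OF partial_copyD(3)[OF assms(1,2)]] that by blast
qed

lemma remaining_extend:
  assumes "i < length Fs" "{p, x} \<in> fE (Fs ! i) - D i"
  shows "remaining (D(i := insert {p, x} (D i))) = (remaining D)(i := remaining D i - 1)"
proof
  fix a
  have "fE (Fs ! i) - insert {p, x} (D i) = (fE (Fs ! i) - D i) - {{p, x}}" by blast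
  then show "remaining (D(i := insert {p, x} (D i))) a = ((remaining D)(i := remaining D i - 1)) a"
    using assms rooted_forest_tuple_finite_edges[OF tuple] unfolding remaining_def by auto
qed

lemma partial_copy_complete:
  assumes copy: "partial_copy D S" and all_done: "\<And>i. i < length Fs \<Longrightarrow> remaining D i = 0"
    and i: "i < length Fs"
  shows "D i = fE (Fs ! i)" "S i = fV (Fs ! i)"
proof -
  have no_edges_left: "fE (Fs ! i) - D i = {}"
    using all_done[OF i] rooted_forest_tuple_finite_edges[OF tuple i] unfolding remaining_def by simp
  then show "D i = fE (Fs ! i)" using partial_copyD(1)[OF copy i] by blast
  show "S i = fV (Fs ! i)"
    using partial_copyD(3)[OF copy i] unfolding no_edges_left by (rule rooted_forest_no_edges[symmetric])
qed

definition blue_admissible :: "(nat \<Rightarrow> 'a set) \<Rightarrow> ('a \<Rightarrow> 'b) \<Rightarrow> 'b set \<Rightarrow> bool" where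
  "blue_admissible S f e \<longleftrightarrow>
     (\<exists>i<length Fs. \<exists>j<length Fs. i \<noteq> j \<and> (\<exists>a\<in>S i. \<exists>c\<in>S j. e = {f a, f c})) \<or>
     (\<exists>i<length Fs. \<exists>a\<in>S i. a \<notin> leaves (Fs ! i) \<and> (\<exists>w\<in>VB - f ` embedded S. e = {f a, w}))"

text \<open>Waiter's invariant: \<open>f\<close> embeds the partial copies, the red edges are exactly the images of
  the embedded edges, a blue edge joins the copies of two different forests or a non-leaf of a copy
  to a vertex outside all copies, and a vertex outside the copies lies on at most one coloured
  edge.\<close>
definition game_inv ::
  "(nat \<Rightarrow> 'a set set) \<Rightarrow> (nat \<Rightarrow> 'a set) \<Rightarrow> ('a \<Rightarrow> 'b) \<Rightarrow> 'b set set \<Rightarrow> 'b set set \<Rightarrow> bool" where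
  "game_inv D S f R Bl \<longleftrightarrow> partial_copy D S \<and>
     inj_on f (embedded S) \<and> f ` embedded S \<subseteq> VB \<and> (\<forall>r\<in>tuple_roots Fs. f r = \<phi> r) \<and>
     R = (\<Union>i<length Fs. (`) f ` D i) \<and>
     (\<forall>r1\<in>tuple_roots Fs. \<forall>r2\<in>tuple_roots Fs. r1 \<noteq> r2 \<longrightarrow> {\<phi> r1, \<phi> r2} \<notin> R \<union> Bl) \<and>
     (\<forall>e\<in>Bl. blue_admissible S f e) \<and>
     (\<forall>w. w \<notin> f ` embedded S \<longrightarrow> (\<forall>e\<in>R \<union> Bl. \<forall>e'\<in>R \<union> Bl. w \<in> e \<longrightarrow> w \<in> e' \<longrightarrow> e = e'))"

lemma game_invD [rule_format]:
  assumes "game_inv D S f R Bl"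
  shows "partial_copy D S" "inj_on f (embedded S)" "f ` embedded S \<subseteq> VB"
    "\<forall>r\<in>tuple_roots Fs. f r = \<phi> r" "R = (\<Union>i<length Fs. (`) f ` D i)"
    "\<forall>r1\<in>tuple_roots Fs. \<forall>r2\<in>tuple_roots Fs. r1 \<noteq> r2 \<longrightarrow> {\<phi> r1, \<phi> r2} \<notin> R \<union> Bl"
    "\<forall>e\<in>Bl. blue_admissible S f e"
    "\<forall>w. w \<notin> f ` embedded S \<longrightarrow> (\<forall>e\<in>R \<union> Bl. \<forall>e'\<in>R \<union> Bl. w \<in> e \<longrightarrow> w \<in> e' \<longrightarrow> e = e')"
  using assms unfolding game_inv_def by - (elim conjE; assumption)+

lemma game_inv_image:
  assumes "game_inv D S f R Bl" "i < length Fs" "a \<in> S i"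
  shows "f a \<in> VB" "f a \<in> f ` embedded S"
  using game_invD(3)[OF assms(1)] embeddedI[where S=S, OF assms(2,3)] by blast+

lemma game_inv_distinct_images:
  assumes "game_inv D S f R Bl" "i < length Fs" "j < length Fs" "i \<noteq> j" "a \<in> S i" "c \<in> S j"
  shows "f a \<noteq> f c"
proof
  assume "f a = f c"
  then have "a = c"
    using game_invD(2)[OF assms(1)] embeddedI[where S=S, OF assms(2,5)] embeddedI[where S=S, OF assms(3,6)]
    by (meson inj_onD)
  moreover have "a \<in> fV (Fs ! i)" "c \<in> fV (Fs ! j)"
    using partial_copy_subset[OF game_invD(1)[OF assms(1)]] assms(2,3,5,6) by blast+
  ultimately show False using same_forest[OF assms(2,3)] assms(4) by blast
qed

lemma fresh_edge:
  assumes "a \<in> VB" "a \<in> f ` embedded S" "v \<in> fresh S f C"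
  shows "{a, v} \<in> complete_edges VB - C"
proof -
  have v: "v \<in> VB" "v \<notin> f ` embedded S" "\<forall>e\<in>C. v \<notin> e"
    using assms(3) unfolding fresh_def by auto
  then have "a \<noteq> v" using assms(2) by blast
  then show ?thesis using doubleton_in_complete_edges[OF assms(1) v(1)] v(3) by blast
qed

lemma red_image_extend:
  assumes copy: "partial_copy D S" and i: "i < length Fs" and p: "p \<in> S i"
    and agree: "\<And>z. z \<in> embedded S \<Longrightarrow> f' z = f z"
  shows "(\<Union>a<length Fs. (`) f' ` (D(i := insert {p, x} (D i))) a) =
    insert {f p, f' x} (\<Union>a<length Fs. (`) f ` D a)"
proof -
  have "f' ` e = f ` e" if "a < length Fs" "e \<in> D a" for a e
    using partial_copyD(4)[OF copy that] embeddedI[where S=S, OF that(1)] agree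
    by (auto intro!: image_cong)
  then have same: "(`) f' ` D a = (`) f ` D a" if "a < length Fs" for a
    using that by (auto intro!: image_cong)
  have "f' ` {p, x} = {f p, f' x}" using agree embeddedI[where S=S, OF i p] by simp
  then have "(`) f' ` (D(i := insert {p, x} (D i))) a =
      ((\<lambda>a. (`) f ` D a)(i := insert {f p, f' x} ((`) f ` D i))) a" if "a < length Fs" for a
    using same[OF that] same[OF i] by simp
  then show ?thesis
    using UN_lessThan_update_insert[OF i, of "\<lambda>a. (`) f ` D a"] by simp
qed

lemma game_invI:
  assumes "partial_copy D S" "inj_on f (embedded S)" "f ` embedded S \<subseteq> VB"
    "\<And>r. r \<in> tuple_roots Fs \<Longrightarrow> f r = \<phi> r" "R = (\<Union>i<length Fs. (`) f ` D i)"
    "\<And>r1 r2. r1 \<in> tuple_roots Fs \<Longrightarrow> r2 \<in> tuple_roots Fs \<Longrightarrow> r1 \<noteq> r2 \<Longrightarrow>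
       {\<phi> r1, \<phi> r2} \<notin> R \<union> Bl"
    "\<And>e. e \<in> Bl \<Longrightarrow> blue_admissible S f e"
    "\<And>w e e'. w \<notin> f ` embedded S \<Longrightarrow> e \<in> R \<union> Bl \<Longrightarrow> e' \<in> R \<union> Bl \<Longrightarrow>
       w \<in> e \<Longrightarrow> w \<in> e' \<Longrightarrow> e = e'"
  shows "game_inv D S f R Bl"
  unfolding game_inv_def by (intro conjI ballI allI impI) (rule assms; assumption)+

lemma blue_admissibleE:
  assumes "blue_admissible S f e"
  obtains (between) i j a c where "i < length Fs" "j < length Fs" "i \<noteq> j" "a \<in> S i" "c \<in> S j"
      "e = {f a, f c}"
    | (outside) i a w where "i < length Fs" "a \<in> S i" "a \<notin> leaves (Fs ! i)"
      "w \<in> VB" "w \<notin> f ` embedded S" "e = {f a, w}"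
  using assms unfolding blue_admissible_def by blast

lemma blue_admissible_extend:
  assumes "blue_admissible S f e" "u \<notin> e" and sub: "\<And>a. S a \<subseteq> S' a"
    and agree: "\<And>z. z \<in> embedded S \<Longrightarrow> f' z = f z"
    and image: "f' ` embedded S' = insert u (f ` embedded S)"
  shows "blue_admissible S' f' e"
proof -
  have f': "f' a = f a" if "i < length Fs" "a \<in> S i" for i a
    using agree embeddedI[where S=S, OF that] by blast
  from assms(1) show ?thesis
  proof (cases rule: blue_admissibleE)
    case (between i j a c)
    then have "a \<in> S' i" "c \<in> S' j" "e = {f' a, f' c}" using sub f' by auto
    with between(1-3) show ?thesis unfolding blue_admissible_def by blast
  next
    case (outside i a w)
    then have "a \<in> S' i" "w \<in> VB - f' ` embedded S'" "e = {f' a, w}"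
      using sub f' image \<open>u \<notin> e\<close> by auto
    with outside(1,3) show ?thesis unfolding blue_admissible_def by blast
  qed
qed

lemma game_inv_root_images:
  assumes "game_inv D S f R Bl" shows "\<phi> ` tuple_roots Fs \<subseteq> f ` embedded S"
proof
  fix v assume "v \<in> \<phi> ` tuple_roots Fs"
  then obtain r where r: "r \<in> tuple_roots Fs" "v = \<phi> r" by blast
  then have "r \<in> embedded S" using partial_copy_roots_embedded[OF game_invD(1)[OF assms]] by blast
  moreover have "v = f r" using r game_invD(4)[OF assms] by simp
  ultimately show "v \<in> f ` embedded S" by blast
qed

lemma game_inv_embed:
  assumes inv: "game_inv D S f R Bl" and i: "i < length Fs"
    and p: "p \<in> S i" and edge: "{p, x} \<in> fE (Fs ! i) - D i" and u: "u \<in> fresh S f (R \<union> Bl)"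
  defines "S' \<equiv> S(i := insert x (S i))" and "f' \<equiv> f(x := u)"
  shows "game_inv (D(i := insert {p, x} (D i))) S' f' (insert {f p, u} R) Bl"
    and "fresh S' f' (insert {f p, u} R \<union> Bl) = fresh S f (R \<union> Bl) - {u}"
    and "\<And>z. z \<in> embedded S \<Longrightarrow> f' z = f z"
proof -
  note copy = game_invD(1)[OF inv]
  have x: "x \<notin> embedded S"
    using partial_copy_extend(1,2)[OF copy i p edge] partial_copy_not_embedded[OF copy i] by blast
  show agree: "\<And>z. z \<in> embedded S \<Longrightarrow> f' z = f z" using x unfolding f'_def by auto
  have u_fresh: "u \<in> VB" "u \<notin> f ` embedded S" "\<And>e. e \<in> R \<union> Bl \<Longrightarrow> u \<notin> e"
    using u unfolding fresh_def by auto
  have embedded': "embedded S' = insert x (embedded S)" unfolding S'_def using embedded_update[OF i] .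
  have image': "f' ` embedded S' = insert u (f ` embedded S)"
    unfolding embedded' f'_def using x by (auto simp: fun_upd_image)
  have "f p \<in> f ` embedded S" using game_inv_image(2)[OF inv i p] .
  show "game_inv (D(i := insert {p, x} (D i))) S' f' (insert {f p, u} R) Bl"
  proof (rule game_invI)
    show "partial_copy (D(i := insert {p, x} (D i))) S'"
      unfolding S'_def using partial_copy_extend(3)[OF copy i p edge] .
    show "inj_on f' (embedded S')"
      unfolding embedded' f'_def using game_invD(2)[OF inv] x u_fresh(2)
      by (simp add: inj_on_fun_updI fun_upd_image) blast
    show "f' ` embedded S' \<subseteq> VB" using image' game_invD(3)[OF inv] u_fresh(1) by simp
    show "f' r = \<phi> r" if "r \<in> tuple_roots Fs" for r
      using that agree game_invD(4)[OF inv] partial_copy_roots_embedded[OF copy] by auto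
    show "insert {f p, u} R = (\<Union>a<length Fs. (`) f' ` (D(i := insert {p, x} (D i))) a)"
      using red_image_extend[where x=x and f'=f' and f=f, OF copy i p agree] game_invD(5)[OF inv]
      by (simp add: f'_def)
    show "{\<phi> r1, \<phi> r2} \<notin> insert {f p, u} R \<union> Bl"
      if "r1 \<in> tuple_roots Fs" "r2 \<in> tuple_roots Fs" "r1 \<noteq> r2" for r1 r2
    proof -
      have "u \<notin> {\<phi> r1, \<phi> r2}" using game_inv_root_images[OF inv] that(1,2) u_fresh(2) by auto
      then show ?thesis using game_invD(6)[OF inv that] by auto
    qed
    show "blue_admissible S' f' e" if "e \<in> Bl" for e
    proof -
      have "S a \<subseteq> S' a" for a unfolding S'_def by auto
      then show ?thesis
        using blue_admissible_extend[OF game_invD(7)[OF inv that] _ _ agree image'] u_fresh(3) that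
        by blast
    qed
    show "e = e'" if "w \<notin> f' ` embedded S'" "e \<in> insert {f p, u} R \<union> Bl"
      "e' \<in> insert {f p, u} R \<union> Bl" "w \<in> e" "w \<in> e'" for w e e'
    proof -
      have "w \<notin> f ` embedded S" "w \<notin> {f p, u}"
        using that(1) image' \<open>f p \<in> f ` embedded S\<close> by auto
      then show ?thesis using game_invD(8)[OF inv] that(2-5) by blast
    qed
  qed
  show "fresh S' f' (insert {f p, u} R \<union> Bl) = fresh S f (R \<union> Bl) - {u}"
    using image' \<open>f p \<in> f ` embedded S\<close> unfolding fresh_def by auto
qed

lemma game_inv_add_blue:
  assumes inv: "game_inv D S f R Bl" and admissible: "blue_admissible S f e"
    and not_roots: "\<And>r1 r2. r1 \<in> tuple_roots Fs \<Longrightarrow> r2 \<in> tuple_roots Fs \<Longrightarrow> e \<noteq> {\<phi> r1, \<phi> r2}"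
    and untouched: "\<And>w e'. w \<notin> f ` embedded S \<Longrightarrow> w \<in> e \<Longrightarrow> e' \<in> R \<union> Bl \<Longrightarrow> w \<notin> e'"
  shows "game_inv D S f R (insert e Bl)"
proof (rule game_invI)
  show "{\<phi> r1, \<phi> r2} \<notin> R \<union> insert e Bl"
    if "r1 \<in> tuple_roots Fs" "r2 \<in> tuple_roots Fs" "r1 \<noteq> r2" for r1 r2
    using game_invD(6)[OF inv that] not_roots[OF that(1,2)] by auto
  show "blue_admissible S f e'" if "e' \<in> insert e Bl" for e'
    using that admissible game_invD(7)[OF inv] by blast
  show "e1 = e2" if "w \<notin> f ` embedded S" "e1 \<in> R \<union> insert e Bl" "e2 \<in> R \<union> insert e Bl"
    "w \<in> e1" "w \<in> e2" for w e1 e2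
    using that game_invD(8)[OF inv] untouched[OF that(1)] by blast
qed (rule game_invD[OF inv]; assumption)+

lemma game_inv_blue_between:
  assumes inv: "game_inv D S f R Bl" and ij: "i < length Fs" "j < length Fs" "i \<noteq> j"
    and a: "a \<in> S i" and c: "c \<in> S j" "c \<notin> tuple_roots Fs"
  shows "game_inv D S f R (insert {f a, f c} Bl)"
    and "fresh S f (R \<union> insert {f a, f c} Bl) = fresh S f (R \<union> Bl)"
proof -
  have image: "f a \<in> f ` embedded S" "f c \<in> f ` embedded S"
    using game_inv_image(2)[OF inv] ij a c by blast+
  have "f c \<noteq> \<phi> r" if "r \<in> tuple_roots Fs" for r
  proof
    assume "f c = \<phi> r"
    then have "f c = f r" using game_invD(4)[OF inv that] by simp
    moreover have "r \<in> embedded S" using partial_copy_roots_embedded[OF game_invD(1)[OF inv]] that by blast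
    ultimately have "c = r"
      using game_invD(2)[OF inv] embeddedI[where S=S, OF ij(2) c(1)] by (meson inj_onD)
    then show False using c(2) that by simp
  qed
  then show "game_inv D S f R (insert {f a, f c} Bl)"
  proof (intro game_inv_add_blue[OF inv])
    show "blue_admissible S f {f a, f c}" unfolding blue_admissible_def using ij a c(1) by blast
  qed (use image in \<open>auto simp: doubleton_eq_iff\<close>)
  show "fresh S f (R \<union> insert {f a, f c} Bl) = fresh S f (R \<union> Bl)"
    using image unfolding fresh_def by blast
qed

lemma game_inv_blue_fresh:
  assumes inv: "game_inv D S f R Bl" and i: "i < length Fs"
    and a: "a \<in> S i" "a \<notin> leaves (Fs ! i)" and w: "w \<in> fresh S f (R \<union> Bl)"
  shows "game_inv D S f R (insert {f a, w} Bl)"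
    and "fresh S f (R \<union> insert {f a, w} Bl) = fresh S f (R \<union> Bl) - {w}"
proof -
  have w_fresh: "w \<in> VB" "w \<notin> f ` embedded S" "\<And>e. e \<in> R \<union> Bl \<Longrightarrow> w \<notin> e"
    using w unfolding fresh_def by auto
  have "f a \<in> f ` embedded S" using game_inv_image(2)[OF inv i a(1)] .
  moreover have "\<phi> r \<in> f ` embedded S" if "r \<in> tuple_roots Fs" for r
    using that game_inv_root_images[OF inv] by blast
  ultimately show "game_inv D S f R (insert {f a, w} Bl)"
  proof (intro game_inv_add_blue[OF inv])
    show "blue_admissible S f {f a, w}" unfolding blue_admissible_def using i a w_fresh(1,2) by blast
  qed (use w_fresh in \<open>auto simp: doubleton_eq_iff\<close>)
  show "fresh S f (R \<union> insert {f a, w} Bl) = fresh S f (R \<union> Bl) - {w}"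
    using \<open>f a \<in> f ` embedded S\<close> unfolding fresh_def by blast
qed

lemma tuple_vertsI: "i < length Fs \<Longrightarrow> x \<in> fV (Fs ! i) \<Longrightarrow> x \<in> tuple_verts Fs"
  unfolding tuple_verts_conv by blast

lemma inj_on_tuple_verts_same_forest:
  assumes "inj_on f (tuple_verts Fs)" "i < length Fs" "j < length Fs"
    and "a \<in> fV (Fs ! i)" "c \<in> fV (Fs ! j)" "f a = f c"
  shows "i = j \<and> a = c"
  using inj_onD[OF assms(1,6) tuple_vertsI[OF assms(2,4)] tuple_vertsI[OF assms(3,5)]]
    same_forest assms(2-5) by blast

lemma game_inv_completed:
  assumes inv: "game_inv D S f R Bl" and all_done: "\<And>i. i < length Fs \<Longrightarrow> remaining D i = 0"
  shows "\<And>i. i < length Fs \<Longrightarrow> S i = fV (Fs ! i)" "embedded S = tuple_verts Fs"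
    "inj_on f (tuple_verts Fs)" "R = (\<Union>i<length Fs. (`) f ` fE (Fs ! i))"
proof -
  note complete = partial_copy_complete[OF game_invD(1)[OF inv] all_done]
  show S: "\<And>i. i < length Fs \<Longrightarrow> S i = fV (Fs ! i)" using complete(2) .
  show verts: "embedded S = tuple_verts Fs" unfolding embedded_def tuple_verts_conv using S by simp
  show "inj_on f (tuple_verts Fs)" using game_invD(2)[OF inv] verts by simp
  show "R = (\<Union>i<length Fs. (`) f ` fE (Fs ! i))" using game_invD(5)[OF inv] complete(1) by simp
qed

lemma game_inv_completed_blue_not_within_copy:
  assumes inv: "game_inv D S f R Bl" and all_done: "\<And>i. i < length Fs \<Longrightarrow> remaining D i = 0"
    and i: "i < length Fs" and e: "e \<in> Bl"
  shows "\<not> e \<subseteq> f ` fV (Fs ! i)"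
proof
  assume inside: "e \<subseteq> f ` fV (Fs ! i)"
  note completed = game_inv_completed[OF inv all_done]
  from game_invD(7)[OF inv e] show False
  proof (cases rule: blue_admissibleE)
    case (between i1 j1 a c)
    then have "i1 = i" "j1 = i"
      using inside inj_on_tuple_verts_same_forest[OF completed(3) _ i] completed(1)
      by (auto simp: image_iff)
    then show False using between(3) by simp
  next
    case (outside i1 a w)
    then show False using inside tuple_vertsI[OF i] completed(2) by auto
  qed
qed

lemma game_inv_completed_outside:
  assumes inv: "game_inv D S f R Bl" and all_done: "\<And>i. i < length Fs \<Longrightarrow> remaining D i = 0"
    and u: "u \<in> VB - f ` tuple_verts Fs"
  shows "card {e \<in> R \<union> Bl. u \<in> e} \<le> 1"
    and "{u, w} \<in> R \<union> Bl \<Longrightarrow> w \<notin> f ` tuple_leaves Fs"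
proof -
  note completed = game_inv_completed[OF inv all_done]
  have "e = e'" if "e \<in> R \<union> Bl" "e' \<in> R \<union> Bl" "u \<in> e" "u \<in> e'" for e e'
    using game_invD(8)[OF inv] u that completed(2) by blast
  then show "card {e \<in> R \<union> Bl. u \<in> e} \<le> 1"
    by (cases "finite {e \<in> R \<union> Bl. u \<in> e}") (auto simp: card_le_Suc0_iff_eq)
  assume uw: "{u, w} \<in> R \<union> Bl"
  have "{u, w} \<notin> R" using u completed(4) edge_subset_nth tuple_vertsI by blast
  with uw have "blue_admissible S f {u, w}" using game_invD(7)[OF inv] by blast
  then obtain i a where a: "i < length Fs" "a \<in> fV (Fs ! i)" "a \<notin> leaves (Fs ! i)" "w = f a"
  proof (cases rule: blue_admissibleE)
    case (between i1 j1 a c)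
    then show ?thesis using u completed(1) tuple_vertsI by (auto simp: doubleton_eq_iff)
  next
    case (outside i1 a w')
    then show ?thesis
      using that[of i1 a] u completed(1,2) tuple_vertsI by (auto simp: doubleton_eq_iff)
  qed
  show "w \<notin> f ` tuple_leaves Fs"
  proof
    assume "w \<in> f ` tuple_leaves Fs"
    then obtain k z where "k < length Fs" "z \<in> leaves (Fs ! k)" "w = f z"
      unfolding tuple_leaves_conv by blast
    then show False
      using inj_on_tuple_verts_same_forest[OF completed(3) _ a(1) _ a(2)] a(3,4)
      unfolding leaves_def by blast
  qed
qed

lemma game_inv_complete:
  assumes inv: "game_inv D S f R Bl" and all_done: "\<And>i. i < length Fs \<Longrightarrow> remaining D i = 0"
  shows "good_red_copy Fs VB \<phi> R Bl"
proof -
  note completed = game_inv_completed[OF inv all_done]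
  show ?thesis
    unfolding good_red_copy_def
  proof (intro exI[of _ f] conjI ballI allI impI)
    show "inj_on f (tuple_verts Fs)" "f ` tuple_verts Fs \<subseteq> VB" "\<And>r. r \<in> tuple_roots Fs \<Longrightarrow> f r = \<phi> r"
      using completed(2,3) game_invD(3,4)[OF inv] by auto
    show "f ` e \<in> R" if "i < length Fs" "e \<in> fE (Fs ! i)" for i e using that completed(4) by blast
    show "{\<phi> r1, \<phi> r2} \<notin> R \<union> Bl" if "r1 \<in> tuple_roots Fs" "r2 \<in> tuple_roots Fs" "r1 \<noteq> r2" for r1 r2
      using game_invD(6)[OF inv that] .
    show "\<not> e \<subseteq> f ` fV (Fs ! i)" if "i < length Fs" "e \<in> Bl" for i e
      using game_inv_completed_blue_not_within_copy[OF inv all_done that] .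
    show "card {e \<in> R \<union> Bl. u \<in> e} \<le> 1" if "u \<in> VB - f ` tuple_verts Fs" for u
      using game_inv_completed_outside(1)[OF inv all_done that] .
    show "w \<notin> f ` tuple_leaves Fs" if "u \<in> VB - f ` tuple_verts Fs" "{u, w} \<in> R \<union> Bl" for u w
      using game_inv_completed_outside(2)[OF inv all_done that] .
  next
    fix i e assume i: "i < length Fs" and "e \<in> R" "e \<subseteq> f ` fV (Fs ! i)"
    then obtain j e0 where j: "j < length Fs" "e0 \<in> fE (Fs ! j)" "e = f ` e0" using completed(4) by blast
    moreover obtain a where "a \<in> e0" "a \<in> fV (Fs ! j)" using edge_subset_nth[OF j(1,2)] by blast
    ultimately have "j = i"
      using \<open>e \<subseteq> f ` fV (Fs ! i)\<close> inj_on_tuple_verts_same_forest[OF completed(3) j(1) i] by blast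
    then show "e \<in> (`) f ` fE (Fs ! i)" using j by blast
  next
    fix e assume "e \<in> R \<union> Bl"
    then show "e \<inter> f ` tuple_verts Fs \<noteq> {}"
    proof
      assume "e \<in> R"
      then obtain j e0 where j: "j < length Fs" "e0 \<in> fE (Fs ! j)" "e = f ` e0" using completed(4) by blast
      then show ?thesis using edge_subset_nth[OF j(1,2)] tuple_vertsI[OF j(1)] by blast
    next
      assume "e \<in> Bl"
      from game_invD(7)[OF inv this] show ?thesis
        by (cases rule: blue_admissibleE) (use completed(1) tuple_vertsI in auto)
    qed
  qed
qed

lemma finite_fresh: "finite (fresh S f C)"
  using finite_board unfolding fresh_def by simp

lemma card_fresh_remove:
  "a \<in> fresh S f C \<Longrightarrow> b \<in> fresh S f C \<Longrightarrow> a \<noteq> b \<Longrightarrow> card (fresh S f C - {a} - {b}) = card (fresh S f C) - 2"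
  using finite_fresh by (simp add: card_Diff_singleton)

lemma embed_new_vertex_not_root:
  assumes "partial_copy D S" "i < length Fs" "p \<in> S i" "{p, x} \<in> fE (Fs ! i) - D i"
  shows "x \<notin> tuple_roots Fs"
  using partial_copy_extend(1,2)[OF assms] partial_copy_not_embedded[OF assms(1,2)]
    partial_copy_roots_embedded[OF assms(1)] by blast

lemma move_embed_blue_fresh:
  assumes inv: "game_inv D S f R Bl" and i: "i < length Fs"
    and p: "p \<in> S i" and edge: "{p, x} \<in> fE (Fs ! i) - D i"
    and ab: "a \<in> fresh S f (R \<union> Bl)" "b \<in> fresh S f (R \<union> Bl)" "a \<noteq> b"
  obtains D' S' f' where "game_inv D' S' f' (insert {f p, a} R) (insert {f p, b} Bl)"
    "remaining D' = (remaining D)(i := remaining D i - 1)"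
    "fresh S' f' (insert {f p, a} R \<union> insert {f p, b} Bl) = fresh S f (R \<union> Bl) - {a} - {b}"
proof -
  define D' S' f' where "D' = D(i := insert {p, x} (D i))" and "S' = S(i := insert x (S i))"
    and "f' = f(x := a)"
  note embed = game_inv_embed[OF inv i p edge ab(1), folded D'_def S'_def f'_def]
  have "f' p = f p" using embed(3) embeddedI[where S=S, OF i p] by blast
  have p': "p \<in> S' i" "p \<notin> leaves (Fs ! i)"
    using p partial_copy_not_leaf[OF game_invD(1)[OF inv] i p edge] unfolding S'_def by auto
  have b': "b \<in> fresh S' f' (insert {f p, a} R \<union> Bl)" using embed(2) ab by simp
  note blue = game_inv_blue_fresh[OF embed(1) i p' b', unfolded \<open>f' p = f p\<close>]
  show ?thesis
    by (rule that[OF blue(1)]) (use blue(2) embed(2) remaining_extend[where D=D, OF i edge] in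
      \<open>auto simp: D'_def\<close>)
qed

lemma move_embed_blue_between:
  assumes inv: "game_inv D S f R Bl" and ij: "i < length Fs" "j < length Fs" "i \<noteq> j"
    and p: "p \<in> S i" and edge: "{p, x} \<in> fE (Fs ! i) - D i" and q: "q \<in> S j"
    and u: "u \<in> fresh S f (R \<union> Bl)"
  obtains D' S' f' where "game_inv D' S' f' (insert {f p, u} R) (insert {f q, u} Bl)"
    "remaining D' = (remaining D)(i := remaining D i - 1)"
    "fresh S' f' (insert {f p, u} R \<union> insert {f q, u} Bl) = fresh S f (R \<union> Bl) - {u}"
proof -
  define D' S' f' where "D' = D(i := insert {p, x} (D i))" and "S' = S(i := insert x (S i))"
    and "f' = f(x := u)"
  note embed = game_inv_embed[OF inv ij(1) p edge u, folded D'_def S'_def f'_def]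
  have "f' q = f q" "f' x = u" using embed(3) embeddedI[where S=S, OF ij(2) q] unfolding f'_def by auto
  have qx: "q \<in> S' j" "x \<in> S' i" using q ij(3) unfolding S'_def by auto
  have "x \<notin> tuple_roots Fs"
    using embed_new_vertex_not_root[OF game_invD(1)[OF inv] ij(1) p edge] .
  note blue = game_inv_blue_between[OF embed(1) ij(2,1) ij(3)[symmetric] qx this,
      unfolded \<open>f' q = f q\<close> \<open>f' x = u\<close>]
  show ?thesis
    by (rule that[OF blue(1)]) (use blue(2) embed(2) remaining_extend[where D=D, OF ij(1) edge] in
      \<open>auto simp: D'_def\<close>)
qed

lemma move_double_embed:
  assumes inv: "game_inv D S f R Bl" and ijk: "i < length Fs" "j < length Fs" "k < length Fs"
    and distinct: "i \<noteq> j" "i \<noteq> k" "j \<noteq> k"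
    and p: "p \<in> S i" and edge_p: "{p, x} \<in> fE (Fs ! i) - D i"
    and q: "q \<in> S j" and edge_q: "{q, y} \<in> fE (Fs ! j) - D j" and s: "s \<in> S k"
    and ab: "a \<in> fresh S f (R \<union> Bl)" "b \<in> fresh S f (R \<union> Bl)" "a \<noteq> b"
  obtains D' S' f' where
    "game_inv D' S' f' (insert {f q, b} (insert {f p, a} R)) (insert {f s, b} (insert {f p, b} Bl))"
    "remaining D' = (remaining D)(i := remaining D i - 1, j := remaining D j - 1)"
    "fresh S' f' (insert {f q, b} (insert {f p, a} R) \<union> insert {f s, b} (insert {f p, b} Bl)) =
       fresh S f (R \<union> Bl) - {a} - {b}"
proof -
  define D1 S1 f1 where "D1 = D(i := insert {p, x} (D i))" and "S1 = S(i := insert x (S i))"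
    and "f1 = f(x := a)"
  note embed1 = game_inv_embed[OF inv ijk(1) p edge_p ab(1), folded D1_def S1_def f1_def]
  have q1: "q \<in> S1 j" "{q, y} \<in> fE (Fs ! j) - D1 j" using q edge_q distinct(1)
    unfolding S1_def D1_def by auto
  have b1: "b \<in> fresh S1 f1 (insert {f p, a} R \<union> Bl)" using embed1(2) ab by simp
  define D2 S2 f2 where "D2 = D1(j := insert {q, y} (D1 j))" and "S2 = S1(j := insert y (S1 j))"
    and "f2 = f1(y := b)"
  have embedded: "p \<in> embedded S" "q \<in> embedded S" "s \<in> embedded S"
    using embeddedI[where S=S] ijk p q s by blast+
  then have "f1 q = f q" using embed1(3) by blast
  note embed2 = game_inv_embed[OF embed1(1) ijk(2) q1 b1, folded D2_def S2_def f2_def, unfolded this]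
  have images: "f2 p = f p" "f2 s = f s" "f2 y = b"
    using embedded embed1(3) embed2(3) embedded_update[OF ijk(1), of S x] unfolding S1_def[symmetric] f2_def
    by auto
  have in_S2: "p \<in> S2 i" "y \<in> S2 j" "s \<in> S2 k"
    using p s distinct unfolding S2_def S1_def by auto
  have "y \<notin> tuple_roots Fs"
    using embed_new_vertex_not_root[OF game_invD(1)[OF embed1(1)] ijk(2) q1] .
  note blue1 = game_inv_blue_between[OF embed2(1) ijk(1,2) distinct(1) in_S2(1,2) this, unfolded images]
  note blue2 = game_inv_blue_between[OF blue1(1) ijk(3,2) distinct(3)[symmetric] in_S2(3,2) \<open>y \<notin> _\<close>,
      unfolded images]
  have "remaining D2 = (remaining D)(i := remaining D i - 1, j := remaining D j - 1)"
    using remaining_extend[where D=D1, OF ijk(2) q1(2)] remaining_extend[where D=D, OF ijk(1) edge_p]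
      distinct(1) unfolding D2_def D1_def by auto
  moreover have "fresh S2 f2 (insert {f q, b} (insert {f p, a} R) \<union> insert {f s, b} (insert {f p, b} Bl)) =
      fresh S f (R \<union> Bl) - {a} - {b}"
    unfolding blue2(2) blue1(2) embed2(2) embed1(2) ..
  ultimately show ?thesis using that[OF blue2(1)] by blast
qed

definition good_position :: "nat \<Rightarrow> 'b set set \<Rightarrow> 'b set set \<Rightarrow> bool" where
  "good_position n R Bl \<longleftrightarrow> (\<exists>D S f. game_inv D S f R Bl \<and> sum (remaining D) {..<length Fs} = n \<and>
     budget (length Fs) (remaining D) (card (fresh S f (R \<union> Bl))))"

lemma good_positionI:
  "game_inv D S f R Bl \<Longrightarrow> budget (length Fs) (remaining D) (card (fresh S f (R \<union> Bl))) \<Longrightarrow>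
    good_position (sum (remaining D) {..<length Fs}) R Bl"
  unfolding good_position_def by blast

lemma good_position_single:
  assumes inv: "game_inv D S f R Bl" and n: "sum (remaining D) {..<length Fs} = Suc n"
    and budget: "budget (length Fs) (remaining D) (card (fresh S f (R \<union> Bl)))"
    and i: "i < length Fs" "0 < remaining D i"
    and others: "\<And>a. a < length Fs \<Longrightarrow> a \<noteq> i \<Longrightarrow> remaining D a = 0"
  shows "waiter_round VB (good_position n) R Bl"
proof -
  obtain p x where px: "p \<in> S i" "{p, x} \<in> fE (Fs ! i) - D i"
    using partial_copy_obtain_frontier[OF game_invD(1)[OF inv] i] by blast
  note budget' = budget_single[OF budget i others]
  obtain u w where uw: "u \<in> fresh S f (R \<union> Bl)" "w \<in> fresh S f (R \<union> Bl)" "u \<noteq> w"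
    using obtain_two_elements[OF finite_fresh] budget' by blast
  have move: "good_position n (insert {f p, a} R) (insert {f p, b} Bl)"
    if ab: "a \<in> fresh S f (R \<union> Bl)" "b \<in> fresh S f (R \<union> Bl)" "a \<noteq> b" for a b
  proof -
    obtain D' S' f' where "game_inv D' S' f' (insert {f p, a} R) (insert {f p, b} Bl)"
      "remaining D' = (remaining D)(i := remaining D i - 1)"
      "fresh S' f' (insert {f p, a} R \<union> insert {f p, b} Bl) = fresh S f (R \<union> Bl) - {a} - {b}"
      using move_embed_blue_fresh[OF inv i(1) px ab] .
    then show ?thesis
      using good_positionI[of D' S' f'] budget' n sum_lessThan_decrement[where d="remaining D", OF i]
        card_fresh_remove[OF ab] by simp
  qed
  have "f p \<in> VB" "f p \<in> f ` embedded S" using game_inv_image[OF inv i(1) px(1)] by auto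
  then have "{f p, u} \<in> complete_edges VB - (R \<union> Bl)" "{f p, w} \<in> complete_edges VB - (R \<union> Bl)"
    using fresh_edge uw(1,2) by blast+
  moreover have "{f p, u} \<noteq> {f p, w}" using uw(3) by (auto simp: doubleton_eq_iff)
  ultimately show ?thesis
    using waiter_roundI move[OF uw] move[OF uw(2,1) uw(3)[symmetric]] by metis
qed

lemma good_position_top_two:
  assumes inv: "game_inv D S f R Bl" and n: "sum (remaining D) {..<length Fs} = Suc n"
    and budget: "budget (length Fs) (remaining D) (card (fresh S f (R \<union> Bl)))"
    and ij: "i < length Fs" "j < length Fs" "i \<noteq> j" "0 < remaining D j"
    and max_i: "\<And>a. a < length Fs \<Longrightarrow> remaining D a \<le> remaining D i"
    and max_j: "\<And>a. a < length Fs \<Longrightarrow> a \<noteq> i \<Longrightarrow> remaining D a \<le> remaining D j"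
    and top_two: "remaining D j = remaining D i \<or>
      (\<forall>a<length Fs. a \<noteq> i \<longrightarrow> a \<noteq> j \<longrightarrow> remaining D a = 0)"
  shows "waiter_round VB (good_position n) R Bl"
proof -
  have "0 < remaining D i" using max_i[OF ij(2)] ij(4) by linarith
  obtain p x where px: "p \<in> S i" "{p, x} \<in> fE (Fs ! i) - D i"
    using partial_copy_obtain_frontier[OF game_invD(1)[OF inv] ij(1) \<open>0 < remaining D i\<close>] by blast
  obtain q y where qy: "q \<in> S j" "{q, y} \<in> fE (Fs ! j) - D j"
    using partial_copy_obtain_frontier[OF game_invD(1)[OF inv] ij(2,4)] by blast
  note budget' = budget_top_two[OF budget ij max_i max_j top_two]
  then obtain u where u: "u \<in> fresh S f (R \<union> Bl)" by fastforce
  have card: "card (fresh S f (R \<union> Bl) - {u}) = card (fresh S f (R \<union> Bl)) - 1"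
    using u finite_fresh by simp
  have move: "good_position n (insert {f a, u} R) (insert {f c, u} Bl)"
    if hyp: "k < length Fs" "k' < length Fs" "k \<noteq> k'" "0 < remaining D k"
      "budget (length Fs) ((remaining D)(k := remaining D k - 1)) (card (fresh S f (R \<union> Bl)) - 1)"
      "a \<in> S k" "{a, z} \<in> fE (Fs ! k) - D k" "c \<in> S k'" for k k' a z c
  proof -
    obtain D' S' f' where "game_inv D' S' f' (insert {f a, u} R) (insert {f c, u} Bl)"
      "remaining D' = (remaining D)(k := remaining D k - 1)"
      "fresh S' f' (insert {f a, u} R \<union> insert {f c, u} Bl) = fresh S f (R \<union> Bl) - {u}"
      using move_embed_blue_between[OF inv hyp(1-3,6-8) u] .
    then show ?thesis
      using good_positionI[of D' S' f'] hyp(5) n card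
        sum_lessThan_decrement[where d="remaining D", OF hyp(1,4)] by simp
  qed
  have "f p \<in> VB" "f p \<in> f ` embedded S" "f q \<in> VB" "f q \<in> f ` embedded S"
    using game_inv_image[OF inv] ij px(1) qy(1) by auto
  then have "{f p, u} \<in> complete_edges VB - (R \<union> Bl)" "{f q, u} \<in> complete_edges VB - (R \<union> Bl)"
    using fresh_edge u by blast+
  moreover have "{f p, u} \<noteq> {f q, u}"
    using game_inv_distinct_images[OF inv ij(1-3) px(1) qy(1)] by (auto simp: doubleton_eq_iff)
  ultimately show ?thesis
    using waiter_roundI move[OF ij(1-3) \<open>0 < remaining D i\<close> _ px qy(1)]
      move[OF ij(2,1) ij(3)[symmetric] ij(4) _ qy px(1)] budget' by metis
qed

lemma good_position_second_round:
  assumes inv: "game_inv D S f R Bl" and n: "sum (remaining D) {..<length Fs} = Suc (Suc n)"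
    and budget: "budget (length Fs) (remaining D) (card (fresh S f (R \<union> Bl)))"
    and ijk: "i < length Fs" "j < length Fs" "k < length Fs" and distinct: "i \<noteq> j" "i \<noteq> k" "j \<noteq> k"
    and strict_max: "\<And>a. a < length Fs \<Longrightarrow> a \<noteq> i \<Longrightarrow> remaining D a < remaining D i"
    and p: "p \<in> S i" "{p, x} \<in> fE (Fs ! i) - D i"
    and q: "q \<in> S j" "{q, y} \<in> fE (Fs ! j) - D j" and s: "s \<in> S k" "{s, z} \<in> fE (Fs ! k) - D k"
    and ab: "a \<in> fresh S f (R \<union> Bl)" "b \<in> fresh S f (R \<union> Bl)" "a \<noteq> b"
  shows "waiter_round VB (good_position n) (insert {f p, a} R) (insert {f p, b} Bl)"
proof -
  have final: "good_position n (insert {f c, b} (insert {f p, a} R)) (insert {f c', b} (insert {f p, b} Bl))"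
    if hyp: "l < length Fs" "l' < length Fs" "i \<noteq> l" "i \<noteq> l'" "l \<noteq> l'"
      "c \<in> S l" "{c, w} \<in> fE (Fs ! l) - D l" "c' \<in> S l'" for l l' c w c'
  proof -
    have "0 < remaining D l" using hyp(7) finite_Diff rooted_forest_tuple_finite_edges[OF tuple hyp(1)]
      unfolding remaining_def by (metis card_gt_0_iff empty_iff)
    obtain D' S' f' where
      "game_inv D' S' f' (insert {f c, b} (insert {f p, a} R)) (insert {f c', b} (insert {f p, b} Bl))"
      "remaining D' = (remaining D)(i := remaining D i - 1, l := remaining D l - 1)"
      "fresh S' f' (insert {f c, b} (insert {f p, a} R) \<union> insert {f c', b} (insert {f p, b} Bl)) =
         fresh S f (R \<union> Bl) - {a} - {b}"
      using move_double_embed[OF inv ijk(1) hyp(1,2) hyp(3-5) p hyp(6,7,8) ab] .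
    moreover have "remaining D l < remaining D i" using strict_max hyp(1,3) by simp
    then have "sum (remaining D') {..<length Fs} = n"
      using \<open>remaining D' = _\<close> sum_lessThan_decrement_two[of i "length Fs" l "remaining D"]
        ijk(1) hyp(1,3) \<open>0 < remaining D l\<close> n by simp
    ultimately show ?thesis
      using good_positionI[of D' S' f'] card_fresh_remove[OF ab]
        budget_strict_max[OF budget ijk(1) hyp(1,3) \<open>0 < remaining D l\<close> strict_max] by simp
  qed
  have fresh_b: "b \<notin> f ` embedded S" "b \<notin> {f p, a}" using ab p(1) ijk(1) embeddedI[where S=S]
    unfolding fresh_def by auto
  have images: "f q \<in> VB" "f q \<in> f ` embedded S" "f s \<in> VB" "f s \<in> f ` embedded S"
    using game_inv_image[OF inv] ijk q(1) s(1) by auto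
  have "f p \<noteq> f q" "f p \<noteq> f s" "f q \<noteq> f s"
    using game_inv_distinct_images[OF inv] ijk distinct p(1) q(1) s(1) by blast+
  then have "{f q, b} \<in> complete_edges VB - (insert {f p, a} R \<union> insert {f p, b} Bl)"
    "{f s, b} \<in> complete_edges VB - (insert {f p, a} R \<union> insert {f p, b} Bl)"
    "{f q, b} \<noteq> {f s, b}"
    using fresh_edge[OF images(1,2) ab(2)] fresh_edge[OF images(3,4) ab(2)] fresh_b images
    by (auto simp: doubleton_eq_iff)
  then show ?thesis
    using waiter_roundI final[OF ijk(2,3) distinct q s(1)]
      final[OF ijk(3,2) distinct(2,1) distinct(3)[symmetric] s q(1)] by metis
qed

lemma card_tuple_roots: "card (tuple_roots Fs) = (\<Sum>i<length Fs. card (fR (Fs ! i)))"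
  unfolding tuple_roots_conv
proof (rule card_UN_disjoint)
  have "finite (fV (Fs ! i))" if "i < length Fs" for i
    using rooted_forest_tuple_graph[OF tuple that] unfolding is_graph_def by simp
  then show "\<forall>i\<in>{..<length Fs}. finite (fR (Fs ! i))"
    using roots_subset_nth finite_subset by blast
  show "\<forall>i\<in>{..<length Fs}. \<forall>j\<in>{..<length Fs}. i \<noteq> j \<longrightarrow> fR (Fs ! i) \<inter> fR (Fs ! j) = {}"
  proof (intro ballI impI)
    fix i j assume "i \<in> {..<length Fs}" "j \<in> {..<length Fs}" "i \<noteq> j"
    then show "fR (Fs ! i) \<inter> fR (Fs ! j) = {}" using roots_subset_nth same_forest by blast
  qed
qed simp

lemma vF_eq: "vF Fs = eF Fs + card (tuple_roots Fs)"
proof -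
  have "vF Fs = (\<Sum>i<length Fs. card (fE (Fs ! i)) + card (fR (Fs ! i)))"
    unfolding vF_def sum_list_conv_sum_lessThan using rooted_forest_card[OF forest_nth] by simp
  then show ?thesis unfolding eF_conv_sum card_tuple_roots sum.distrib .
qed

lemma good_position_initial:
  assumes "m_suitable m Fs" "eF Fs < m" "card VB = m + vF Fs - eF Fs"
    and "inj_on \<phi> (tuple_roots Fs)" "\<phi> ` tuple_roots Fs \<subseteq> VB"
  shows "good_position (eF Fs) {} {}"
proof -
  define S where "S i = fR (Fs ! i)" for i
  have copy: "partial_copy (\<lambda>_. {}) S" unfolding partial_copy_def S_def using forest_nth by simp
  have embedded: "embedded S = tuple_roots Fs" unfolding embedded_def S_def tuple_roots_conv ..
  have inv: "game_inv (\<lambda>_. {}) S \<phi> {} {}"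
    by (rule game_invI) (use copy assms(4,5) in \<open>simp_all add: embedded\<close>)
  have "card (fresh S \<phi> {}) = m"
  proof -
    have "fresh S \<phi> {} = VB - \<phi> ` tuple_roots Fs" unfolding fresh_def embedded by auto
    moreover have "finite (\<phi> ` tuple_roots Fs)" using assms(5) finite_board finite_subset by blast
    ultimately show ?thesis
      using assms(3-5) vF_eq card_image[OF assms(4)] by (simp add: card_Diff_subset)
  qed
  moreover have "remaining (\<lambda>_. {}) = (\<lambda>i. card (fE (Fs ! i)))" unfolding remaining_def by simp
  ultimately show ?thesis
    using good_positionI[OF inv] m_suitable_budget[OF assms(1,2)] eF_conv_sum[of Fs] by simp
qed

lemma good_position_strict_max:
  assumes inv: "game_inv D S f R Bl" and n: "sum (remaining D) {..<length Fs} = Suc (Suc n)"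
    and budget: "budget (length Fs) (remaining D) (card (fresh S f (R \<union> Bl)))"
    and ijk: "i < length Fs" "j < length Fs" "k < length Fs" and distinct: "i \<noteq> j" "i \<noteq> k" "j \<noteq> k"
    and strict_max: "\<And>a. a < length Fs \<Longrightarrow> a \<noteq> i \<Longrightarrow> remaining D a < remaining D i"
    and pos: "0 < remaining D j" "0 < remaining D k"
  shows "waiter_round VB (waiter_round VB (good_position n)) R Bl"
proof -
  have "0 < remaining D i" using strict_max[OF ijk(2) distinct(1)[symmetric]] by simp
  note copy = game_invD(1)[OF inv]
  obtain p x where p: "p \<in> S i" "{p, x} \<in> fE (Fs ! i) - D i"
    using partial_copy_obtain_frontier[OF copy ijk(1) \<open>0 < remaining D i\<close>] by blast
  obtain q y where q: "q \<in> S j" "{q, y} \<in> fE (Fs ! j) - D j"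
    using partial_copy_obtain_frontier[OF copy ijk(2) pos(1)] by blast
  obtain s z where s: "s \<in> S k" "{s, z} \<in> fE (Fs ! k) - D k"
    using partial_copy_obtain_frontier[OF copy ijk(3) pos(2)] by blast
  obtain u w where uw: "u \<in> fresh S f (R \<union> Bl)" "w \<in> fresh S f (R \<union> Bl)" "u \<noteq> w"
    using obtain_two_elements[OF finite_fresh] budget_strict_max[OF budget ijk(1,2) distinct(1) pos(1) strict_max]
    by blast
  have second: "waiter_round VB (good_position n) (insert {f p, a} R) (insert {f p, b} Bl)"
    if "a \<in> fresh S f (R \<union> Bl)" "b \<in> fresh S f (R \<union> Bl)" "a \<noteq> b" for a b
    by (rule good_position_second_round[OF inv n budget ijk distinct _ p q s that]) (rule strict_max)
  have "f p \<in> VB" "f p \<in> f ` embedded S" using game_inv_image[OF inv ijk(1) p(1)] by auto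
  then have "{f p, u} \<in> complete_edges VB - (R \<union> Bl)" "{f p, w} \<in> complete_edges VB - (R \<union> Bl)"
    using fresh_edge uw(1,2) by blast+
  moreover have "{f p, u} \<noteq> {f p, w}" using uw(3) by (auto simp: doubleton_eq_iff)
  ultimately show ?thesis
    using waiter_roundI second[OF uw] second[OF uw(2,1) uw(3)[symmetric]] by metis
qed

lemma good_position_step:
  assumes "good_position (Suc n) R Bl"
  shows "waiter_round VB (good_position n) R Bl \<or>
    (\<exists>n'. n = Suc n' \<and> waiter_round VB (waiter_round VB (good_position n')) R Bl)"
proof -
  obtain D S f where inv: "game_inv D S f R Bl" and n: "sum (remaining D) {..<length Fs} = Suc n"
    and budget: "budget (length Fs) (remaining D) (card (fresh S f (R \<union> Bl)))"
    using assms unfolding good_position_def by blast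
  let ?d = "remaining D"
  have "\<exists>a<length Fs. 0 < ?d a"
  proof (rule ccontr)
    assume "\<not> ?thesis"
    then have "sum ?d {..<length Fs} = 0" by simp
    then show False using n by simp
  qed
  then obtain a0 where a0: "a0 < length Fs" "0 < ?d a0" by blast
  from ex_max_index[of "{..<length Fs}" ?d] a0(1)
  obtain i where i: "i < length Fs" "\<And>a. a < length Fs \<Longrightarrow> ?d a \<le> ?d i" by auto
  have "0 < ?d i" using i(2)[OF a0(1)] a0(2) by linarith
  show ?thesis
  proof (cases "\<forall>a<length Fs. a \<noteq> i \<longrightarrow> ?d a = 0")
    case True
    have "waiter_round VB (good_position n) R Bl"
      by (rule good_position_single[OF inv n budget i(1) \<open>0 < ?d i\<close>]) (use True in simp)
    then show ?thesis ..
  next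
    case False
    then obtain a1 where a1: "a1 < length Fs" "a1 \<noteq> i" "0 < ?d a1" by auto
    have "finite {a. a < length Fs \<and> a \<noteq> i}" "{a. a < length Fs \<and> a \<noteq> i} \<noteq> {}" using a1 by auto
    from ex_max_index[OF this, of ?d]
    obtain j where j: "j < length Fs" "j \<noteq> i" "\<And>a. a < length Fs \<Longrightarrow> a \<noteq> i \<Longrightarrow> ?d a \<le> ?d j"
      by auto
    have "0 < ?d j" using j(3)[OF a1(1,2)] a1(3) by linarith
    show ?thesis
    proof (cases "?d j = ?d i \<or> (\<forall>a<length Fs. a \<noteq> i \<longrightarrow> a \<noteq> j \<longrightarrow> ?d a = 0)")
      case True
      have "waiter_round VB (good_position n) R Bl"
        by (rule good_position_top_two[OF inv n budget i(1) j(1) j(2)[symmetric] \<open>0 < ?d j\<close> i(2) j(3) True])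
      then show ?thesis ..
    next
      case False
      then obtain k where k: "k < length Fs" "k \<noteq> i" "k \<noteq> j" "0 < ?d k" by auto
      have strict_max: "?d a < ?d i" if "a < length Fs" "a \<noteq> i" for a
        using j(3)[OF that] i(2)[OF j(1)] False by linarith
      have "?d i + ?d j \<le> Suc n" using sum_lessThan_ge_pair[OF i(1) j(1) j(2)[symmetric], of ?d] n by simp
      then have "2 \<le> n" using strict_max[OF j(1,2)] \<open>0 < ?d j\<close> by linarith
      then obtain n' where "n = Suc n'" by (cases n) auto
      moreover have "waiter_round VB (waiter_round VB (good_position n')) R Bl"
        by (rule good_position_strict_max[OF inv _ budget i(1) j(1) k(1) j(2)[symmetric] k(2)[symmetric]
              k(3)[symmetric] strict_max \<open>0 < ?d j\<close> k(4)]) (use n \<open>n = Suc n'\<close> in simp)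
      ultimately show ?thesis by blast
    qed
  qed
qed

lemma good_position_wc_force:
  "good_position n R Bl \<Longrightarrow> wc_force VB n (good_red_copy Fs VB \<phi>) R Bl"
proof (induction n arbitrary: R Bl rule: less_induct)
  case (less n)
  show ?case
  proof (cases n)
    case 0
    with less.prems obtain D S f where "game_inv D S f R Bl" "sum (remaining D) {..<length Fs} = 0"
      unfolding good_position_def by blast
    then show ?thesis using game_inv_complete \<open>n = 0\<close> by simp
  next
    case (Suc m)
    have IH: "\<And>k R Bl. k < n \<Longrightarrow> good_position k R Bl \<Longrightarrow> wc_force VB k (good_red_copy Fs VB \<phi>) R Bl"
      by (rule less.IH)
    from good_position_step less.prems[unfolded Suc] consider
        "waiter_round VB (good_position m) R Bl"
      | m' where "m = Suc m'" "waiter_round VB (waiter_round VB (good_position m')) R Bl"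
      by blast
    then show ?thesis
    proof cases
      case 1
      have "waiter_round VB (wc_force VB m (good_red_copy Fs VB \<phi>)) R Bl"
        by (rule waiter_round_mono[OF 1]) (use IH Suc in blast)
      then show ?thesis unfolding Suc by (rule wc_force_Suc_if_waiter_round)
    next
      case 2
      have "waiter_round VB (wc_force VB m' (good_red_copy Fs VB \<phi>)) R' Bl'"
        if "waiter_round VB (good_position m') R' Bl'" for R' Bl'
        by (rule waiter_round_mono[OF that]) (use IH Suc 2(1) in auto)
      then have "waiter_round VB (waiter_round VB (wc_force VB m' (good_red_copy Fs VB \<phi>))) R Bl"
        by (rule waiter_round_mono[OF 2(2)])
      then have "waiter_round VB (wc_force VB m (good_red_copy Fs VB \<phi>)) R Bl"
        unfolding 2(1) by (rule waiter_round_mono) (rule wc_force_Suc_if_waiter_round)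
      then show ?thesis unfolding Suc by (rule wc_force_Suc_if_waiter_round)
    qed
  qed
qed

end

theorem lemma3p18:
  fixes Fs :: "'a rforest list" and VB :: "'b set" and \<phi> :: "'a \<Rightarrow> 'b" and m :: nat
  assumes "rooted_forest_tuple Fs"
    and "m_suitable m Fs"
    and "m > eF Fs"
    and "finite VB"
    and "card VB = m + vF Fs - eF Fs"
    and "inj_on \<phi> (tuple_roots Fs)"
    and "\<phi> ` tuple_roots Fs \<subseteq> VB"
  shows "wc_force VB (eF Fs) (good_red_copy Fs VB \<phi>) {} {}"
proof -
  interpret forest_game Fs VB \<phi> using assms(1,4) by unfold_locales
  have "good_position (eF Fs) {} {}" using good_position_initial assms(2,3,5-7) by blast
  then show ?thesis by (rule good_position_wc_force)
qed

end
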